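(* Let $G$ be a group and let $\mathrm{A}(G)$ be the kernel of $\epsilon\colon\mathrm{Gr}(\mathrm{Pq}(G))\to G$. Then there is an exact sequence of abelian groups \[ \mathrm{H}_2(G;\mathbb{Z})\longrightarrow\mathrm{A}(G)\longrightarrow\mathrm{B}(G)\longrightarrow\mathrm{H}_1(G;\mathbb{Z})\longrightarrow 0, \] where $\mathrm{B}(G)$ is the quotient of the free abelian group $\mathbb{Z}\mathrm{Cl}(G)$ on the set $\mathrm{Cl}(G)$ of conjugacy classes of elements of $G$ by the relations $n[a]=[a^n]$ for all $a\in G$ and all $n\in\mathbb{Z}$.
   Context: For a group $G$, $\mathrm{Pq}(G)$ is the power quandle on the underlying set of $G$ with $a\rhd b=aba^{-1}$, $\pi^n(a)=a^n$ ($n\in\mathbb{Z}$), and unit the identity $e$. $\mathrm{Gr}(\mathrm{Pq}(G))$ is the group with generators $\sigma(a)$, $a\in G$, and relations $\sigma(aba^{-1})=\sigma(a)\sigma(b)\sigma(a)^{-1}$, $\sigma(a^n)=\sigma(a)^n$, $\sigma(e)=1$ for all $a,b\in G$, $n\in\mathbb{Z}$. $\epsilon\colon\mathrm{Gr}(\mathrm{Pq}(G))\to G$ is the surjective homomorphism with $\epsilon(\sigma(a))=a$; its kernel is abelian (indeed central). $[a]$ denotes the conjugacy class of $a$. $\mathrm{H}_i(G;\mathbb{Z})$ is integral group homology. *)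

theory Defs
  imports "HOL-Algebra.Algebra"
begin

text \<open>Words in the generators sigma(a), a in G: a letter (True, a) stands for
  sigma(a), a letter (False, a) for sigma(a)^(-1).\<close>

type_synonym 'a word = "(bool \<times> 'a) list"

definition pq_words :: "('a, 'b) monoid_scheme \<Rightarrow> 'a word set" where
  "pq_words G = {w. \<forall>l \<in> set w. snd l \<in> carrier G}"

definition sigma_pow_word :: "'a \<Rightarrow> int \<Rightarrow> 'a word" where
  "sigma_pow_word a n = replicate (nat \<bar>n\<bar>) (n \<ge> 0, a)"

inductive pq_eq :: "('a, 'b) monoid_scheme \<Rightarrow> 'a word \<Rightarrow> 'a word \<Rightarrow> bool"
  for G where
  refl: "w \<in> pq_words G \<Longrightarrow> pq_eq G w w"
| sym: "pq_eq G u v \<Longrightarrow> pq_eq G v u"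
| trans: "pq_eq G u v \<Longrightarrow> pq_eq G v w \<Longrightarrow> pq_eq G u w"
| cong: "pq_eq G u v \<Longrightarrow> w1 \<in> pq_words G \<Longrightarrow> w2 \<in> pq_words G \<Longrightarrow>
         pq_eq G (w1 @ u @ w2) (w1 @ v @ w2)"
| cancel: "x \<in> carrier G \<Longrightarrow> pq_eq G [(b, x), (\<not> b, x)] []"
| rel_conj: "a \<in> carrier G \<Longrightarrow> b \<in> carrier G \<Longrightarrow>
         pq_eq G [(True, a \<otimes>\<^bsub>G\<^esub> b \<otimes>\<^bsub>G\<^esub> inv\<^bsub>G\<^esub> a)] [(True, a), (True, b), (False, a)]"
| rel_pow: "a \<in> carrier G \<Longrightarrow> pq_eq G [(True, a [^]\<^bsub>G\<^esub> (n::int))] (sigma_pow_word a n)"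
| rel_unit: "pq_eq G [(True, \<one>\<^bsub>G\<^esub>)] []"

definition pq_class :: "('a, 'b) monoid_scheme \<Rightarrow> 'a word \<Rightarrow> 'a word set" where
  "pq_class G w = {z. pq_eq G w z}"

definition GrPq :: "('a, 'b) monoid_scheme \<Rightarrow> 'a word set monoid" where
  "GrPq G = \<lparr> carrier = pq_class G ` pq_words G,
             monoid.mult = (\<lambda>U V. {z. \<exists>x\<in>U. \<exists>y\<in>V. pq_eq G (x @ y) z}),
             monoid.one = pq_class G [] \<rparr>"

definition eval_word :: "('a, 'b) monoid_scheme \<Rightarrow> 'a word \<Rightarrow> 'a" where
  "eval_word G w = foldr (\<lambda>l acc. (if fst l then snd l else inv\<^bsub>G\<^esub> (snd l)) \<otimes>\<^bsub>G\<^esub> acc) w \<one>\<^bsub>G\<^esub>"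

definition pq_eps :: "('a, 'b) monoid_scheme \<Rightarrow> 'a word set \<Rightarrow> 'a" where
  "pq_eps G S = eval_word G (SOME w. w \<in> S)"

definition A_grp :: "('a, 'b) monoid_scheme \<Rightarrow> 'a word set monoid" where
  "A_grp G = (GrPq G)\<lparr> carrier := kernel (GrPq G) G (pq_eps G) \<rparr>"

section \<open>Integral group homology via the (inhomogeneous) bar complex\<close>

text \<open>Chains C_n: finitely supported integer combinations of n-tuples [g1|...|gn].\<close>
definition chain_grp :: "('a, 'b) monoid_scheme \<Rightarrow> nat \<Rightarrow> ('a list \<Rightarrow> int) monoid" where
  "chain_grp G n = \<lparr> carrier = {f. finite {x. f x \<noteq> 0} \<and>
                      (\<forall>x. f x \<noteq> 0 \<longrightarrow> length x = n \<and> set x \<subseteq> carrier G)},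
                    monoid.mult = (\<lambda>f g x. f x + g x),
                    monoid.one = (\<lambda>_. 0) \<rparr>"

definition bar_face :: "('a, 'b) monoid_scheme \<Rightarrow> nat \<Rightarrow> 'a list \<Rightarrow> 'a list" where
  "bar_face G i x = (if i = 0 then tl x
                     else if i = length x then butlast x
                     else take (i - 1) x @ [x ! (i - 1) \<otimes>\<^bsub>G\<^esub> x ! i] @ drop (i + 1) x)"

text \<open>Coefficient of y in d[x] (trivial coefficients Z); d_0 = 0.\<close>
definition bar_coeff :: "('a, 'b) monoid_scheme \<Rightarrow> 'a list \<Rightarrow> 'a list \<Rightarrow> int" where
  "bar_coeff G x y = (if x = [] then 0
     else (\<Sum>i\<in>{0..length x}. (-1) ^ i * (if bar_face G i x = y then 1 else 0)))"

definition bar_d :: "('a, 'b) monoid_scheme \<Rightarrow> ('a list \<Rightarrow> int) \<Rightarrow> ('a list \<Rightarrow> int)" where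
  "bar_d G f = (\<lambda>y. \<Sum>x\<in>{x. f x \<noteq> 0}. f x * bar_coeff G x y)"

definition cycles :: "('a, 'b) monoid_scheme \<Rightarrow> nat \<Rightarrow> ('a list \<Rightarrow> int) set" where
  "cycles G n = {f \<in> carrier (chain_grp G n). bar_d G f = (\<lambda>_. 0)}"

definition boundaries :: "('a, 'b) monoid_scheme \<Rightarrow> nat \<Rightarrow> ('a list \<Rightarrow> int) set" where
  "boundaries G n = bar_d G ` carrier (chain_grp G (Suc n))"

definition group_homology :: "('a, 'b) monoid_scheme \<Rightarrow> nat \<Rightarrow> ('a list \<Rightarrow> int) set monoid" where
  "group_homology G n = ((chain_grp G n)\<lparr> carrier := cycles G n \<rparr>) Mod (boundaries G n)"

definition conj_class :: "('a, 'b) monoid_scheme \<Rightarrow> 'a \<Rightarrow> 'a set" where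
  "conj_class G a = {g \<otimes>\<^bsub>G\<^esub> a \<otimes>\<^bsub>G\<^esub> inv\<^bsub>G\<^esub> g | g. g \<in> carrier G}"

definition conj_classes :: "('a, 'b) monoid_scheme \<Rightarrow> 'a set set" where
  "conj_classes G = conj_class G ` carrier G"

definition free_ab_Cl :: "('a, 'b) monoid_scheme \<Rightarrow> ('a set \<Rightarrow> int) monoid" where
  "free_ab_Cl G = \<lparr> carrier = {f. finite {c. f c \<noteq> 0} \<and> (\<forall>c. f c \<noteq> 0 \<longrightarrow> c \<in> conj_classes G)},
                   monoid.mult = (\<lambda>f g c. f c + g c),
                   monoid.one = (\<lambda>_. 0) \<rparr>"

definition B_rel :: "('a, 'b) monoid_scheme \<Rightarrow> 'a \<Rightarrow> int \<Rightarrow> ('a set \<Rightarrow> int)" where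
  "B_rel G a n = (\<lambda>c. (if c = conj_class G a then n else 0)
                     - (if c = conj_class G (a [^]\<^bsub>G\<^esub> n) then 1 else 0))"

definition B_grp :: "('a, 'b) monoid_scheme \<Rightarrow> ('a set \<Rightarrow> int) set monoid" where
  "B_grp G = free_ab_Cl G Mod
     generate (free_ab_Cl G) {B_rel G a n | a n. a \<in> carrier G}"

end

theory Submission
  imports Defs
begin

(* The generators sigma(a) of Gr(Pq(G)) form a set-theoretic section of epsilon, so
   tau(x, y) = sigma(x) sigma(y) sigma(xy)^-1 is a 2-cocycle with values in the central kernel A(G);
   on bar chains [x|y] |-> tau(x, y) kills boundaries and induces H_2(G) -> A(G). Reading a word in
   the letters sigma(a)^(+-1) as the 1-chain sum (+-[a]) and passing to conjugacy classes respects
   all defining relations of Gr(Pq(G)) modulo n[a] = [a^n], which gives A(G) -> B(G); choosing a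
   representative of every class gives B(G) -> H_1(G). The differences [a] - [g a g^-1] and
   n[a] - [a^n] are boundaries of 2-chains on which tau vanishes, and every word w can be written
   as sigma(epsilon(w)) times tau(c) for a 2-chain c with boundary chain(w) - [epsilon(w)]; chasing
   these two facts gives exactness. *)

section \<open>Free abelian groups as finitely supported integer functions\<close>

definition free_ab :: "'v set \<Rightarrow> ('v \<Rightarrow> int) monoid" where
  "free_ab V = \<lparr> carrier = {f. finite {x. f x \<noteq> 0} \<and> (\<forall>x. f x \<noteq> 0 \<longrightarrow> x \<in> V)},
                monoid.mult = (\<lambda>f g x. f x + g x), monoid.one = (\<lambda>_. 0) \<rparr>"

definition basis :: "int \<Rightarrow> 'v \<Rightarrow> 'v \<Rightarrow> int" where
  "basis k v = (\<lambda>y. if y = v then k else 0)"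

lemma free_ab_mult [simp]: "f \<otimes>\<^bsub>free_ab V\<^esub> g = (\<lambda>x. f x + g x)"
  by (simp add: free_ab_def)

lemma free_ab_one [simp]: "\<one>\<^bsub>free_ab V\<^esub> = (\<lambda>_. 0)"
  by (simp add: free_ab_def)

lemma free_ab_carrier:
  "f \<in> carrier (free_ab V) \<longleftrightarrow> finite {x. f x \<noteq> 0} \<and> (\<forall>x. f x \<noteq> 0 \<longrightarrow> x \<in> V)"
  by (simp add: free_ab_def)

lemma free_ab_Cl_eq: "free_ab_Cl G = free_ab (conj_classes G)"
  by (simp add: free_ab_Cl_def free_ab_def)

lemma comm_group_free_ab: "comm_group (free_ab V)"
proof (rule comm_groupI)
  fix f g assume f: "f \<in> carrier (free_ab V)" and g: "g \<in> carrier (free_ab V)"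
  have "{x. f x + g x \<noteq> 0} \<subseteq> {x. f x \<noteq> 0} \<union> {x. g x \<noteq> 0}" by auto
  then show "f \<otimes>\<^bsub>free_ab V\<^esub> g \<in> carrier (free_ab V)"
    using f g by (auto simp: free_ab_carrier intro: finite_subset)
next
  fix f assume "f \<in> carrier (free_ab V)"
  then show "\<exists>g\<in>carrier (free_ab V). g \<otimes>\<^bsub>free_ab V\<^esub> f = \<one>\<^bsub>free_ab V\<^esub>"
    by (intro bexI[of _ "\<lambda>x. - f x"]) (simp_all add: free_ab_carrier)
qed (auto simp: free_ab_carrier add.assoc add.commute)

interpretation free_ab: comm_group "free_ab V"
  by (rule comm_group_free_ab)

lemma free_ab_inv [simp]: "f \<in> carrier (free_ab V) \<Longrightarrow> inv\<^bsub>free_ab V\<^esub> f = (\<lambda>x. - f x)"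
  by (rule free_ab.inv_equality) (auto simp: free_ab_carrier)

lemma free_ab_int_pow: "f \<in> carrier (free_ab V) \<Longrightarrow> f [^]\<^bsub>free_ab V\<^esub> (k::int) = (\<lambda>x. k * f x)"
proof -
  assume f: "f \<in> carrier (free_ab V)"
  have nat_pow: "f [^]\<^bsub>free_ab V\<^esub> (n::nat) = (\<lambda>x. int n * f x)" for n
    by (induction n) (simp_all add: distrib_right add.commute)
  show ?thesis
  proof (cases "k < 0")
    case True
    then have "f [^]\<^bsub>free_ab V\<^esub> k = inv\<^bsub>free_ab V\<^esub> (f [^]\<^bsub>free_ab V\<^esub> nat (- k))"
      by (simp only: int_pow_def2 if_True)
    also have "\<dots> = (\<lambda>x. - (f [^]\<^bsub>free_ab V\<^esub> nat (- k)) x)"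
      using f by simp
    finally show ?thesis using True by (simp add: nat_pow)
  next
    case False
    then have "f [^]\<^bsub>free_ab V\<^esub> k = f [^]\<^bsub>free_ab V\<^esub> nat k"
      by (simp only: int_pow_def2 if_False)
    then show ?thesis using False by (simp add: nat_pow)
  qed
qed

lemma basis_carrier [simp]: "v \<in> V \<Longrightarrow> basis k v \<in> carrier (free_ab V)"
  by (auto simp: free_ab_carrier basis_def)

lemma basis_eq_int_pow: "v \<in> V \<Longrightarrow> basis k v = basis 1 v [^]\<^bsub>free_ab V\<^esub> k"
  by (simp add: free_ab_int_pow[OF basis_carrier]) (simp add: basis_def fun_eq_iff)

lemma free_ab_induct [consumes 1, case_names zero add_basis]:
  assumes "z \<in> carrier (free_ab V)"
    and zero: "P (\<lambda>_. 0)"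
    and add_basis: "\<And>z v k. z \<in> carrier (free_ab V) \<Longrightarrow> v \<in> V \<Longrightarrow> P z \<Longrightarrow>
                          P (z \<otimes>\<^bsub>free_ab V\<^esub> basis k v)"
  shows "P z"
proof -
  have "z \<in> carrier (free_ab V) \<Longrightarrow> card {x. z x \<noteq> 0} = n \<Longrightarrow> P z" for n z
  proof (induction n arbitrary: z)
    case 0
    then have "z = (\<lambda>_. 0)" by (auto simp: free_ab_carrier)
    then show ?case using zero by simp
  next
    case (Suc n)
    then obtain v where v: "z v \<noteq> 0" by fastforce
    have fin: "finite {x. z x \<noteq> 0}" and vV: "v \<in> V"
      using Suc.prems v by (auto simp: free_ab_carrier)
    define z' where "z' = z(v := 0)"
    have supp: "{x. z' x \<noteq> 0} = {x. z x \<noteq> 0} - {v}" by (auto simp: z'_def)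
    have z': "z' \<in> carrier (free_ab V)"
      using Suc.prems(1) by (auto simp: free_ab_carrier z'_def intro: finite_subset[OF _ fin])
    have "P z'" using Suc z' v fin by (simp add: supp)
    then have "P (z' \<otimes>\<^bsub>free_ab V\<^esub> basis (z v) v)" using add_basis z' vV by blast
    moreover have "z' \<otimes>\<^bsub>free_ab V\<^esub> basis (z v) v = z" by (auto simp: z'_def basis_def)
    ultimately show ?case by simp
  qed
  then show ?thesis using assms(1) by blast
qed

lemma free_ab_hom_into_subgroup:
  assumes h: "h \<in> hom (free_ab V) H" and "group H" and K: "subgroup K H"
    and gen: "\<And>v. v \<in> V \<Longrightarrow> h (basis 1 v) \<in> K"
    and z: "z \<in> carrier (free_ab V)"
  shows "h z \<in> K"
proof -
  interpret h: group_hom "free_ab V" H h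
    using h \<open>group H\<close> by (simp add: group_hom_def group_hom_axioms_def free_ab.is_group)
  show ?thesis
    using z
  proof (induction rule: free_ab_induct)
    case zero
    then show ?case using h.hom_one subgroup.one_closed[OF K] by simp
  next
    case (add_basis z v k)
    have "h (basis k v) \<in> K"
      using add_basis(2) gen[OF add_basis(2)]
      by (simp add: basis_eq_int_pow[of v V k] h.hom_int_pow h.H.subgroup_int_pow_closed[OF K])
    then show ?case
      using add_basis by (simp del: free_ab_mult add: subgroup.m_closed[OF K])
  qed
qed

lemma free_ab_hom_eqI:
  assumes h1: "h1 \<in> hom (free_ab V) H" and h2: "h2 \<in> hom (free_ab V) H" and "group H"
    and agree: "\<And>v. v \<in> V \<Longrightarrow> h1 (basis 1 v) = h2 (basis 1 v)"
    and z: "z \<in> carrier (free_ab V)"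
  shows "h1 z = h2 z"
proof -
  interpret h1: group_hom "free_ab V" H h1
    using h1 \<open>group H\<close> by (simp add: group_hom_def group_hom_axioms_def free_ab.is_group)
  interpret h2: group_hom "free_ab V" H h2
    using h2 \<open>group H\<close> by (simp add: group_hom_def group_hom_axioms_def free_ab.is_group)
  show ?thesis
    using z
  proof (induction rule: free_ab_induct)
    case zero
    then show ?case using h1.hom_one h2.hom_one by simp
  next
    case (add_basis z v k)
    have "h1 (basis k v) = h2 (basis k v)"
      using add_basis(2) agree[OF add_basis(2)]
      by (simp add: basis_eq_int_pow[of v V k] h1.hom_int_pow h2.hom_int_pow)
    then show ?case
      using add_basis by (simp del: free_ab_mult add: h1.hom_mult h2.hom_mult)
  qed
qed

lemma sum_over_support:
  assumes "finite S" "{x. f x \<noteq> (0::int)} \<subseteq> S"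
  shows "(\<Sum>x\<in>{x. f x \<noteq> 0}. f x * c x) = (\<Sum>x\<in>S. f x * c x)"
  by (rule sum.mono_neutral_left) (use assms in \<open>auto intro: finite_subset\<close>)

definition lin_ext :: "('c, 'd) monoid_scheme \<Rightarrow> ('v \<Rightarrow> 'c) \<Rightarrow> ('v \<Rightarrow> int) \<Rightarrow> 'c" where
  "lin_ext H \<phi> z = finprod H (\<lambda>v. \<phi> v [^]\<^bsub>H\<^esub> z v) {v. z v \<noteq> 0}"

context comm_group
begin

lemma lin_ext_eq_finprod:
  assumes "\<phi> \<in> V \<rightarrow> carrier G" and "finite S" "{v. z v \<noteq> 0} \<subseteq> S" "S \<subseteq> V"
  shows "lin_ext G \<phi> z = finprod G (\<lambda>v. \<phi> v [^] z v) S"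
  unfolding lin_ext_def
  by (rule finprod_mono_neutral_cong_left) (use assms in auto)

lemma lin_ext_hom:
  assumes phi: "\<phi> \<in> V \<rightarrow> carrier G"
  shows "lin_ext G \<phi> \<in> hom (free_ab V) G"
proof (rule homI)
  fix z assume "z \<in> carrier (free_ab V)"
  then show "lin_ext G \<phi> z \<in> carrier G"
    using phi unfolding lin_ext_def by (intro finprod_closed) (auto simp: free_ab_carrier)
next
  fix f g assume f: "f \<in> carrier (free_ab V)" and g: "g \<in> carrier (free_ab V)"
  let ?S = "{v. f v \<noteq> 0} \<union> {v. g v \<noteq> 0}"
  have S: "finite ?S" "?S \<subseteq> V" using f g by (auto simp: free_ab_carrier)
  have pv: "\<phi> v \<in> carrier G" if "v \<in> ?S" for v using phi S(2) that by auto
  have "{v. f v + g v \<noteq> 0} \<subseteq> ?S" by auto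
  then have "lin_ext G \<phi> (f \<otimes>\<^bsub>free_ab V\<^esub> g) = finprod G (\<lambda>v. \<phi> v [^] (f v + g v)) ?S"
    using lin_ext_eq_finprod[OF phi S(1) _ S(2)] by simp
  also have "\<dots> = finprod G (\<lambda>v. \<phi> v [^] f v \<otimes> \<phi> v [^] g v) ?S"
    by (intro finprod_cong') (use pv in \<open>auto simp: int_pow_mult\<close>)
  also have "\<dots> = finprod G (\<lambda>v. \<phi> v [^] f v) ?S \<otimes> finprod G (\<lambda>v. \<phi> v [^] g v) ?S"
    using pv by (intro finprod_multf) auto
  also have "\<dots> = lin_ext G \<phi> f \<otimes> lin_ext G \<phi> g"
    using lin_ext_eq_finprod[OF phi S(1) _ S(2)] by auto
  finally show "lin_ext G \<phi> (f \<otimes>\<^bsub>free_ab V\<^esub> g) = lin_ext G \<phi> f \<otimes> lin_ext G \<phi> g" .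
qed

lemma lin_ext_basis:
  assumes "\<phi> v \<in> carrier G"
  shows "lin_ext G \<phi> (basis k v) = \<phi> v [^] k"
proof (cases "k = 0")
  case False
  then have "{x. basis k v x \<noteq> 0} = {v}" by (auto simp: basis_def)
  then show ?thesis using assms by (simp add: lin_ext_def basis_def)
qed (simp add: lin_ext_def basis_def)

lemma hom_mult_inv:
  assumes "h1 \<in> hom K G" "h2 \<in> hom K G" "group K"
  shows "(\<lambda>x. h1 x \<otimes> inv (h2 x)) \<in> hom K G"
proof -
  interpret h1: group_hom K G h1 using assms by (simp add: group_hom_def group_hom_axioms_def is_group)
  interpret h2: group_hom K G h2 using assms by (simp add: group_hom_def group_hom_axioms_def is_group)
  show ?thesis by (rule homI) (simp_all add: inv_mult_group m_ac)
qed

end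

lemma (in group) inv_mult_cancel_left [simp]:
  "x \<in> carrier G \<Longrightarrow> y \<in> carrier G \<Longrightarrow> inv x \<otimes> (x \<otimes> y) = y"
  by (simp add: m_assoc[symmetric])

lemma (in group) mult_inv_cancel_left [simp]:
  "x \<in> carrier G \<Longrightarrow> y \<in> carrier G \<Longrightarrow> x \<otimes> (inv x \<otimes> y) = y"
  by (simp add: m_assoc[symmetric])

definition via_rep :: "('a \<Rightarrow> 'b) \<Rightarrow> 'a set \<Rightarrow> 'b" where
  "via_rep h S = h (SOME x. x \<in> S)"

lemma via_rep_eqI:
  assumes "x \<in> S" and "\<And>y. y \<in> S \<Longrightarrow> h y = h x"
  shows "via_rep h S = h x"
  unfolding via_rep_def using assms someI[of "\<lambda>y. y \<in> S"] by blast

lemma carrier_subquotient: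
  "carrier ((G\<lparr>carrier := Z\<rparr>) Mod N) = (\<lambda>z. N #>\<^bsub>G\<^esub> z) ` Z"
  by (auto simp: FactGroup_def RCOSETS_def)

context group_hom
begin

lemma via_rep_coset:
  assumes "N \<lhd> G" and "N \<subseteq> kernel G H h" and z: "z \<in> carrier G"
  shows "via_rep h (N #> z) = h z"
proof (rule via_rep_eqI)
  show "z \<in> N #> z" using z normal_imp_subgroup[OF assms(1)] by (rule G.rcos_self)
  fix y assume "y \<in> N #> z"
  then obtain n where "n \<in> N" "y = n \<otimes> z" by (auto simp: r_coset_def)
  then show "h y = h z"
    using assms(2) z subgroup.subset[OF normal_imp_subgroup[OF assms(1)]] by (auto simp: kernel_def)
qed

lemma via_rep_hom_subquotient:
  assumes N: "N \<lhd> G" and "N \<subseteq> kernel G H h" and Z: "Z \<subseteq> carrier G"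
  shows "via_rep h \<in> hom ((G\<lparr>carrier := Z\<rparr>) Mod N) H"
proof (rule homI)
  fix S assume "S \<in> carrier ((G\<lparr>carrier := Z\<rparr>) Mod N)"
  then show "via_rep h S \<in> carrier H"
    using Z via_rep_coset[OF assms(1,2)] by (auto simp: carrier_subquotient)
next
  fix S S' assume "S \<in> carrier ((G\<lparr>carrier := Z\<rparr>) Mod N)" "S' \<in> carrier ((G\<lparr>carrier := Z\<rparr>) Mod N)"
  then obtain x y where "x \<in> Z" "S = N #> x" "y \<in> Z" "S' = N #> y"
    by (auto simp: carrier_subquotient)
  moreover have "x \<in> carrier G" "y \<in> carrier G" using calculation Z by auto
  ultimately show "via_rep h (S \<otimes>\<^bsub>(G\<lparr>carrier := Z\<rparr>) Mod N\<^esub> S') = via_rep h S \<otimes>\<^bsub>H\<^esub> via_rep h S'"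
    by (simp add: FactGroup_def normal.rcos_sum[OF N] via_rep_coset[OF assms(1,2)])
qed

end

section \<open>The group Gr(Pq(G)) and the central subgroup A(G)\<close>

definition word_inv :: "'a word \<Rightarrow> 'a word" where
  "word_inv w = rev (map (\<lambda>l. (\<not> fst l, snd l)) w)"

definition letter_val :: "('a, 'b) monoid_scheme \<Rightarrow> bool \<times> 'a \<Rightarrow> 'a" where
  "letter_val G l = (if fst l then snd l else inv\<^bsub>G\<^esub> (snd l))"

definition sigma :: "('a, 'b) monoid_scheme \<Rightarrow> 'a \<Rightarrow> 'a word set" where
  "sigma G a = pq_class G [(True, a)]"

lemma pq_words_simps [simp]:
  "[] \<in> pq_words G"
  "l # w \<in> pq_words G \<longleftrightarrow> snd l \<in> carrier G \<and> w \<in> pq_words G"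
  "u @ v \<in> pq_words G \<longleftrightarrow> u \<in> pq_words G \<and> v \<in> pq_words G"
  by (auto simp: pq_words_def)

lemma eval_word_Nil [simp]: "eval_word G [] = \<one>\<^bsub>G\<^esub>"
  by (simp add: eval_word_def)

lemma eval_word_Cons [simp]: "eval_word G (l # w) = letter_val G l \<otimes>\<^bsub>G\<^esub> eval_word G w"
  by (simp add: eval_word_def letter_val_def)

context group
begin

lemma pq_eq_words: "pq_eq G u v \<Longrightarrow> u \<in> pq_words G \<and> v \<in> pq_words G"
proof (induction rule: pq_eq.induct)
  case (rel_pow a n)
  then show ?case by (auto simp: pq_words_def sigma_pow_word_def)
qed simp_all

lemma pq_eq_append: "pq_eq G u v \<Longrightarrow> pq_eq G u' v' \<Longrightarrow> pq_eq G (u @ u') (v @ v')"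
proof -
  assume uv: "pq_eq G u v" and uv': "pq_eq G u' v'"
  have "pq_eq G (u @ u') (v @ u')"
    using pq_eq.cong[OF uv, of "[]" u'] uv' pq_eq_words by simp
  moreover have "pq_eq G (v @ u') (v @ v')"
    using pq_eq.cong[OF uv', of v "[]"] uv pq_eq_words by simp
  ultimately show ?thesis by (rule pq_eq.trans)
qed

lemma pq_class_eq_iff: "u \<in> pq_words G \<Longrightarrow> pq_class G u = pq_class G v \<longleftrightarrow> pq_eq G u v"
proof
  assume "u \<in> pq_words G" "pq_class G u = pq_class G v"
  then have "u \<in> pq_class G v" by (auto simp: pq_class_def intro: pq_eq.refl)
  then show "pq_eq G u v" by (simp add: pq_class_def pq_eq.sym)
next
  assume "pq_eq G u v"
  then show "pq_class G u = pq_class G v"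
    unfolding pq_class_def using pq_eq.sym pq_eq.trans by blast
qed

lemma pq_class_eqI: "pq_eq G u v \<Longrightarrow> pq_class G u = pq_class G v"
  using pq_class_eq_iff pq_eq_words by blast

lemma GrPq_mult_class:
  assumes u: "u \<in> pq_words G" and v: "v \<in> pq_words G"
  shows "pq_class G u \<otimes>\<^bsub>GrPq G\<^esub> pq_class G v = pq_class G (u @ v)"
proof -
  have "{z. \<exists>x\<in>pq_class G u. \<exists>y\<in>pq_class G v. pq_eq G (x @ y) z} = pq_class G (u @ v)"
  proof (intro Set.set_eqI iffI)
    fix z assume "z \<in> {z. \<exists>x\<in>pq_class G u. \<exists>y\<in>pq_class G v. pq_eq G (x @ y) z}"
    then obtain x y where "pq_eq G u x" "pq_eq G v y" "pq_eq G (x @ y) z"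
      by (auto simp: pq_class_def)
    then show "z \<in> pq_class G (u @ v)"
      by (auto simp: pq_class_def intro: pq_eq.trans pq_eq_append)
  next
    fix z assume "z \<in> pq_class G (u @ v)"
    moreover have "u \<in> pq_class G u" "v \<in> pq_class G v"
      using u v by (simp_all add: pq_class_def pq_eq.refl)
    ultimately show "z \<in> {z. \<exists>x\<in>pq_class G u. \<exists>y\<in>pq_class G v. pq_eq G (x @ y) z}"
      by (auto simp: pq_class_def)
  qed
  then show ?thesis by (simp add: GrPq_def)
qed

lemma GrPq_one: "\<one>\<^bsub>GrPq G\<^esub> = pq_class G []"
  by (simp add: GrPq_def)

lemma GrPq_carrier: "carrier (GrPq G) = pq_class G ` pq_words G"
  by (simp add: GrPq_def)

lemma word_inv_cancel: "w \<in> pq_words G \<Longrightarrow> pq_eq G (w @ word_inv w) []"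
proof (induction w)
  case Nil
  then show ?case by (simp add: word_inv_def pq_eq.refl)
next
  case (Cons l w)
  obtain b x where l: "l = (b, x)" by (cases l)
  have x: "x \<in> carrier G" and w: "w \<in> pq_words G" using Cons.prems l by auto
  have "(l # w) @ word_inv (l # w) = [l] @ (w @ word_inv w) @ [(\<not> b, x)]"
    by (simp add: word_inv_def l)
  moreover have "pq_eq G ([l] @ (w @ word_inv w) @ [(\<not> b, x)]) ([l] @ [] @ [(\<not> b, x)])"
    by (rule pq_eq.cong) (use Cons w x l in auto)
  moreover have "pq_eq G ([l] @ [] @ [(\<not> b, x)]) []"
    using pq_eq.cancel[OF x, of b] l by simp
  ultimately show ?case by (metis pq_eq.trans)
qed

lemma word_inv_word_inv [simp]: "word_inv (word_inv w) = w"
  by (simp add: word_inv_def rev_map comp_def)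

lemma group_GrPq: "group (GrPq G)"
proof (rule groupI)
  fix x y assume "x \<in> carrier (GrPq G)" "y \<in> carrier (GrPq G)"
  then show "x \<otimes>\<^bsub>GrPq G\<^esub> y \<in> carrier (GrPq G)"
    by (auto simp: GrPq_carrier GrPq_mult_class)
next
  show "\<one>\<^bsub>GrPq G\<^esub> \<in> carrier (GrPq G)" by (auto simp: GrPq_carrier GrPq_one)
next
  fix x y z assume "x \<in> carrier (GrPq G)" "y \<in> carrier (GrPq G)" "z \<in> carrier (GrPq G)"
  then show "x \<otimes>\<^bsub>GrPq G\<^esub> y \<otimes>\<^bsub>GrPq G\<^esub> z = x \<otimes>\<^bsub>GrPq G\<^esub> (y \<otimes>\<^bsub>GrPq G\<^esub> z)"
    by (auto simp: GrPq_carrier GrPq_mult_class)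
next
  fix x assume "x \<in> carrier (GrPq G)"
  then show "\<one>\<^bsub>GrPq G\<^esub> \<otimes>\<^bsub>GrPq G\<^esub> x = x"
    by (auto simp: GrPq_carrier GrPq_mult_class GrPq_one)
next
  fix x assume "x \<in> carrier (GrPq G)"
  then obtain w where w: "w \<in> pq_words G" "x = pq_class G w" by (auto simp: GrPq_carrier)
  have wi: "word_inv w \<in> pq_words G" using w by (auto simp: word_inv_def pq_words_def)
  have "pq_class G (word_inv w) \<otimes>\<^bsub>GrPq G\<^esub> x = \<one>\<^bsub>GrPq G\<^esub>"
    using w wi word_inv_cancel[OF wi] by (simp add: GrPq_mult_class pq_class_eqI GrPq_one)
  then show "\<exists>y\<in>carrier (GrPq G). y \<otimes>\<^bsub>GrPq G\<^esub> x = \<one>\<^bsub>GrPq G\<^esub>"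
    using wi by (auto simp: GrPq_carrier)
qed

end

(* A copy of the group locale: interpreting GrPq G as a group inside group itself would make the
   interpretation recurse into GrPq (GrPq G). *)
locale pq_group = group

sublocale pq_group \<subseteq> GR: group "GrPq G" by (rule group_GrPq)

context pq_group
begin

abbreviation "pq_kernel \<equiv> kernel (GrPq G) G (pq_eps G)"

lemma pq_class_carrier [simp]: "w \<in> pq_words G \<Longrightarrow> pq_class G w \<in> carrier (GrPq G)"
  by (simp add: GrPq_carrier)

lemma sigma_carrier [simp]: "a \<in> carrier G \<Longrightarrow> sigma G a \<in> carrier (GrPq G)"
  by (simp add: sigma_def)

lemma pq_class_Cons: "snd l \<in> carrier G \<Longrightarrow> w \<in> pq_words G \<Longrightarrow>
    pq_class G (l # w) = pq_class G [l] \<otimes>\<^bsub>GrPq G\<^esub> pq_class G w"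
  using GrPq_mult_class[of "[l]" w] by simp

lemma pq_class_Nil: "pq_class G [] = \<one>\<^bsub>GrPq G\<^esub>" by (simp add: GrPq_one)

lemma pq_class_inv_letter: "a \<in> carrier G \<Longrightarrow> pq_class G [(False, a)] = inv\<^bsub>GrPq G\<^esub> sigma G a"
proof -
  assume a: "a \<in> carrier G"
  have "sigma G a \<otimes>\<^bsub>GrPq G\<^esub> pq_class G [(False, a)] = pq_class G [(True, a), (False, a)]"
    using GrPq_mult_class[of "[(True, a)]" "[(False, a)]"] a by (simp add: sigma_def)
  also have "\<dots> = \<one>\<^bsub>GrPq G\<^esub>"
    using pq_eq.cancel[OF a, of True] a by (simp add: pq_class_eq_iff GrPq_one)
  finally show ?thesis
    by (metis GR.inv_equality GR.inv_inv GR.inv_closed a pq_class_carrier pq_words_simps(1,2) sigma_carrier snd_conv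
        GR.inv_unique')
qed

lemma sigma_conj: "a \<in> carrier G \<Longrightarrow> b \<in> carrier G \<Longrightarrow>
   sigma G (a \<otimes> b \<otimes> inv a) = sigma G a \<otimes>\<^bsub>GrPq G\<^esub> sigma G b \<otimes>\<^bsub>GrPq G\<^esub> inv\<^bsub>GrPq G\<^esub> sigma G a"
proof -
  assume a: "a \<in> carrier G" and b: "b \<in> carrier G"
  have "sigma G (a \<otimes> b \<otimes> inv a) = pq_class G [(True, a), (True, b), (False, a)]"
    using pq_class_eqI[OF pq_eq.rel_conj[OF a b]] by (simp add: sigma_def)
  also have "\<dots> = sigma G a \<otimes>\<^bsub>GrPq G\<^esub> (sigma G b \<otimes>\<^bsub>GrPq G\<^esub> pq_class G [(False, a)])"
    using a b GrPq_mult_class[of "[(True, a)]" "[(True, b), (False, a)]"]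
      GrPq_mult_class[of "[(True, b)]" "[(False, a)]"] by (simp add: sigma_def)
  finally show ?thesis
    using a b by (simp add: pq_class_inv_letter GR.m_assoc)
qed

lemma sigma_one: "sigma G \<one> = \<one>\<^bsub>GrPq G\<^esub>"
  using pq_eq.rel_unit[of G] by (simp add: sigma_def pq_class_eq_iff GrPq_one)

lemma pq_class_replicate_True: "a \<in> carrier G \<Longrightarrow> pq_class G (replicate m (True, a)) = sigma G a [^]\<^bsub>GrPq G\<^esub> m"
proof (induction m)
  case 0 then show ?case by (simp add: GrPq_one)
next
  case (Suc m)
  have "pq_class G (replicate (Suc m) (True, a)) = sigma G a \<otimes>\<^bsub>GrPq G\<^esub> sigma G a [^]\<^bsub>GrPq G\<^esub> m"
    using Suc by (simp add: pq_class_Cons[of "(True, a)"] sigma_def[symmetric] pq_words_def)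
  also have "\<dots> = sigma G a [^]\<^bsub>GrPq G\<^esub> Suc m"
    by (rule GR.nat_pow_Suc2[symmetric]) (simp add: Suc)
  finally show ?case .
qed

lemma pq_class_replicate_False: "a \<in> carrier G \<Longrightarrow> pq_class G (replicate m (False, a)) = inv\<^bsub>GrPq G\<^esub> (sigma G a [^]\<^bsub>GrPq G\<^esub> m)"
proof (induction m)
  case 0 then show ?case by (simp add: pq_class_Nil)
next
  case (Suc m)
  have "pq_class G (replicate (Suc m) (False, a)) = inv\<^bsub>GrPq G\<^esub> sigma G a \<otimes>\<^bsub>GrPq G\<^esub> (inv\<^bsub>GrPq G\<^esub> sigma G a) [^]\<^bsub>GrPq G\<^esub> m"
    using Suc by (simp add: pq_class_Cons[of "(False, a)"] pq_class_inv_letter GR.nat_pow_inv pq_words_def)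
  also have "\<dots> = (inv\<^bsub>GrPq G\<^esub> sigma G a) [^]\<^bsub>GrPq G\<^esub> Suc m"
    by (rule GR.nat_pow_Suc2[symmetric]) (simp add: Suc)
  finally show ?case by (simp only: GR.nat_pow_inv[OF sigma_carrier[OF Suc.prems]])
qed

lemma sigma_int_pow: "a \<in> carrier G \<Longrightarrow> sigma G (a [^] (n::int)) = sigma G a [^]\<^bsub>GrPq G\<^esub> n"
proof -
  assume a: "a \<in> carrier G"
  have "sigma G (a [^] n) = pq_class G (sigma_pow_word a n)"
    using pq_class_eqI[OF pq_eq.rel_pow[OF a, of n]] by (simp add: sigma_def)
  also have "\<dots> = sigma G a [^]\<^bsub>GrPq G\<^esub> n"
  proof (cases "n < 0")
    case True
    then have "sigma_pow_word a n = replicate (nat (- n)) (False, a)"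
      by (simp add: sigma_pow_word_def)
    then show ?thesis using True a by (simp only: pq_class_replicate_False int_pow_def2 if_True)
  next
    case False
    then have "sigma_pow_word a n = replicate (nat n) (True, a)"
      by (simp add: sigma_pow_word_def)
    then show ?thesis using False a by (simp only: pq_class_replicate_True int_pow_def2 if_False)
  qed
  finally show ?thesis .
qed

lemma sigma_inv: "a \<in> carrier G \<Longrightarrow> sigma G (inv a) = inv\<^bsub>GrPq G\<^esub> sigma G a"
proof -
  assume a: "a \<in> carrier G"
  have "a [^] (-1::int) = inv a" using int_pow_neg[OF a, of 1] int_pow_1[OF a] by simp
  then have "sigma G (inv a) = sigma G (a [^] (-1::int))" by simp
  also have "\<dots> = sigma G a [^]\<^bsub>GrPq G\<^esub> (-1::int)" using a by (rule sigma_int_pow)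
  also have "\<dots> = inv\<^bsub>GrPq G\<^esub> sigma G a"
    using GR.int_pow_neg[OF sigma_carrier[OF a], of 1] GR.int_pow_1[OF sigma_carrier[OF a]] by simp
  finally show ?thesis .
qed

lemma letter_val_carrier [simp]: "snd l \<in> carrier G \<Longrightarrow> letter_val G l \<in> carrier G"
  by (simp add: letter_val_def)

lemma eval_word_carrier [simp]: "w \<in> pq_words G \<Longrightarrow> eval_word G w \<in> carrier G"
  by (induction w) auto

lemma eval_word_append: "u \<in> pq_words G \<Longrightarrow> v \<in> pq_words G \<Longrightarrow>
    eval_word G (u @ v) = eval_word G u \<otimes> eval_word G v"
  by (induction u) (auto simp: m_assoc)

lemma eval_word_replicate_True: "a \<in> carrier G \<Longrightarrow> eval_word G (replicate m (True, a)) = a [^] m"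
proof (induction m)
  case (Suc m)
  then show ?case by (simp add: letter_val_def) (metis nat_pow_Suc2 nat_pow_Suc)
qed simp

lemma eval_word_replicate_False: "a \<in> carrier G \<Longrightarrow> eval_word G (replicate m (False, a)) = inv (a [^] m)"
proof (induction m)
  case (Suc m)
  then have "eval_word G (replicate (Suc m) (False, a)) = inv a \<otimes> inv (a [^] m)" by (simp add: letter_val_def)
  also have "\<dots> = inv (a [^] m \<otimes> a)" using Suc by (simp add: inv_mult_group)
  finally show ?case by simp
qed simp

lemma eval_sigma_pow_word: "a \<in> carrier G \<Longrightarrow> eval_word G (sigma_pow_word a n) = a [^] n"
proof (cases "n < 0")
  case True
  assume a: "a \<in> carrier G"
  have "sigma_pow_word a n = replicate (nat (- n)) (False, a)" using True by (simp add: sigma_pow_word_def)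
  then show ?thesis using True a by (simp only: eval_word_replicate_False int_pow_def2 if_True)
next
  case False
  assume a: "a \<in> carrier G"
  have "sigma_pow_word a n = replicate (nat n) (True, a)" using False by (simp add: sigma_pow_word_def)
  then show ?thesis using False a by (simp only: eval_word_replicate_True int_pow_def2 if_False)
qed

lemma eval_word_pq_eq: "pq_eq G u v \<Longrightarrow> eval_word G u = eval_word G v"
proof (induction rule: pq_eq.induct)
  case (cong u v w1 w2)
  then have "u \<in> pq_words G" "v \<in> pq_words G" using pq_eq_words by auto
  then show ?case using cong by (simp add: eval_word_append)
next
  case (cancel x b)
  then show ?case by (cases b) (auto simp: letter_val_def)
next
  case (rel_conj a b)
  then show ?case by (simp add: letter_val_def m_assoc)
next
  case (rel_pow a n)
  then show ?case by (simp add: eval_sigma_pow_word letter_val_def)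
qed (auto simp: letter_val_def)

lemma pq_eps_class: "w \<in> pq_words G \<Longrightarrow> pq_eps G (pq_class G w) = eval_word G w"
proof -
  assume w: "w \<in> pq_words G"
  have "w \<in> pq_class G w" using w by (simp add: pq_class_def pq_eq.refl)
  then have "(SOME x. x \<in> pq_class G w) \<in> pq_class G w" by (rule someI)
  then have "pq_eq G w (SOME x. x \<in> pq_class G w)" by (simp add: pq_class_def)
  then show ?thesis unfolding pq_eps_def by (simp add: eval_word_pq_eq)
qed

lemma pq_eps_hom: "pq_eps G \<in> hom (GrPq G) G"
proof (rule homI)
  fix x assume "x \<in> carrier (GrPq G)"
  then show "pq_eps G x \<in> carrier G" by (auto simp: GrPq_carrier pq_eps_class)
next
  fix x y assume "x \<in> carrier (GrPq G)" "y \<in> carrier (GrPq G)"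
  then show "pq_eps G (x \<otimes>\<^bsub>GrPq G\<^esub> y) = pq_eps G x \<otimes> pq_eps G y"
    by (auto simp: GrPq_carrier pq_eps_class GrPq_mult_class eval_word_append)
qed

lemma group_hom_pq_eps: "group_hom (GrPq G) G (pq_eps G)"
  by (simp add: group_hom_def group_hom_axioms_def GR.is_group is_group pq_eps_hom)

lemma pq_eps_sigma [simp]: "a \<in> carrier G \<Longrightarrow> pq_eps G (sigma G a) = a"
  by (simp add: sigma_def pq_eps_class letter_val_def)

lemma subgroup_pq_kernel: "subgroup pq_kernel (GrPq G)"
  using group_hom.subgroup_kernel[OF group_hom_pq_eps] .

lemma pq_class_single: "snd l \<in> carrier G \<Longrightarrow> pq_class G [l] = sigma G (letter_val G l)"
proof -
  assume l: "snd l \<in> carrier G"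
  obtain b g where bg: "l = (b, g)" by (cases l)
  show ?thesis
  proof (cases b)
    case True then show ?thesis using bg by (simp add: sigma_def letter_val_def)
  next
    case False then show ?thesis using bg l by (simp add: pq_class_inv_letter sigma_inv letter_val_def)
  qed
qed

lemma pq_class_Cons_sigma: "snd l \<in> carrier G \<Longrightarrow> w \<in> pq_words G \<Longrightarrow>
    pq_class G (l # w) = sigma G (letter_val G l) \<otimes>\<^bsub>GrPq G\<^esub> pq_class G w"
  by (simp add: pq_class_Cons[of l w] pq_class_single)

lemma sigma_mult_sigma: "h \<in> carrier G \<Longrightarrow> c \<in> carrier G \<Longrightarrow>
  sigma G h \<otimes>\<^bsub>GrPq G\<^esub> sigma G c = sigma G (h \<otimes> c \<otimes> inv h) \<otimes>\<^bsub>GrPq G\<^esub> sigma G h"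
  by (simp add: sigma_conj GR.m_assoc)

lemma pq_class_mult_sigma: "w \<in> pq_words G \<Longrightarrow> b \<in> carrier G \<Longrightarrow>
  pq_class G w \<otimes>\<^bsub>GrPq G\<^esub> sigma G b = sigma G (eval_word G w \<otimes> b \<otimes> inv (eval_word G w)) \<otimes>\<^bsub>GrPq G\<^esub> pq_class G w"
proof (induction w arbitrary: b)
  case Nil then show ?case by (simp add: pq_class_Nil)
next
  case (Cons l w)
  have l: "snd l \<in> carrier G" and w: "w \<in> pq_words G" using Cons.prems by auto
  define h where "h = letter_val G l"
  define e where "e = eval_word G w"
  have h: "h \<in> carrier G" and e: "e \<in> carrier G" using l w by (simp_all add: h_def e_def)
  have c: "e \<otimes> b \<otimes> inv e \<in> carrier G" using e Cons.prems by simp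
  have "pq_class G (l # w) \<otimes>\<^bsub>GrPq G\<^esub> sigma G b = sigma G h \<otimes>\<^bsub>GrPq G\<^esub> (pq_class G w \<otimes>\<^bsub>GrPq G\<^esub> sigma G b)"
    using l w Cons.prems by (simp add: pq_class_Cons_sigma h_def GR.m_assoc)
  also have "\<dots> = sigma G h \<otimes>\<^bsub>GrPq G\<^esub> sigma G (e \<otimes> b \<otimes> inv e) \<otimes>\<^bsub>GrPq G\<^esub> pq_class G w"
    using Cons.IH[OF w Cons.prems(2)] w h c by (simp add: e_def GR.m_assoc)
  also have "\<dots> = sigma G (h \<otimes> (e \<otimes> b \<otimes> inv e) \<otimes> inv h) \<otimes>\<^bsub>GrPq G\<^esub> sigma G h \<otimes>\<^bsub>GrPq G\<^esub> pq_class G w"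
    by (simp only: sigma_mult_sigma[OF h c])
  also have "h \<otimes> (e \<otimes> b \<otimes> inv e) \<otimes> inv h = (h \<otimes> e) \<otimes> b \<otimes> inv (h \<otimes> e)"
    using h e Cons.prems by (simp add: m_assoc inv_mult_group)
  also have "sigma G ((h \<otimes> e) \<otimes> b \<otimes> inv (h \<otimes> e)) \<otimes>\<^bsub>GrPq G\<^esub> sigma G h \<otimes>\<^bsub>GrPq G\<^esub> pq_class G w
     = sigma G (eval_word G (l # w) \<otimes> b \<otimes> inv (eval_word G (l # w))) \<otimes>\<^bsub>GrPq G\<^esub> pq_class G (l # w)"
    using l w h e Cons.prems by (simp add: pq_class_Cons_sigma h_def e_def GR.m_assoc)
  finally show ?case .
qed

lemma pq_kernel_commute_sigma:
  assumes u: "u \<in> pq_kernel" and b: "b \<in> carrier G"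
  shows "u \<otimes>\<^bsub>GrPq G\<^esub> sigma G b = sigma G b \<otimes>\<^bsub>GrPq G\<^esub> u"
proof -
  obtain w where w: "w \<in> pq_words G" "u = pq_class G w" using u by (auto simp: kernel_def GrPq_carrier)
  have "eval_word G w = \<one>" using u w by (simp add: kernel_def pq_eps_class)
  then show ?thesis using pq_class_mult_sigma[OF w(1) b] w b by simp
qed

lemma pq_kernel_central:
  assumes u: "u \<in> pq_kernel" and v: "v \<in> carrier (GrPq G)"
  shows "u \<otimes>\<^bsub>GrPq G\<^esub> v = v \<otimes>\<^bsub>GrPq G\<^esub> u"
proof -
  have uc: "u \<in> carrier (GrPq G)" using u by (simp add: kernel_def)
  obtain w where w: "w \<in> pq_words G" "v = pq_class G w" using v by (auto simp: GrPq_carrier)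
  have "u \<otimes>\<^bsub>GrPq G\<^esub> pq_class G w = pq_class G w \<otimes>\<^bsub>GrPq G\<^esub> u" using w(1)
  proof (induction w)
    case Nil then show ?case using uc by (simp add: pq_class_Nil)
  next
    case (Cons l w)
    have l: "snd l \<in> carrier G" and w: "w \<in> pq_words G" using Cons.prems by auto
    have s: "sigma G (letter_val G l) \<in> carrier (GrPq G)" using l by simp
    have "u \<otimes>\<^bsub>GrPq G\<^esub> pq_class G (l # w) = u \<otimes>\<^bsub>GrPq G\<^esub> sigma G (letter_val G l) \<otimes>\<^bsub>GrPq G\<^esub> pq_class G w"
      using l w uc by (simp add: pq_class_Cons_sigma GR.m_assoc)
    also have "\<dots> = sigma G (letter_val G l) \<otimes>\<^bsub>GrPq G\<^esub> u \<otimes>\<^bsub>GrPq G\<^esub> pq_class G w"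
      by (simp only: pq_kernel_commute_sigma[OF u letter_val_carrier[OF l]])
    also have "\<dots> = sigma G (letter_val G l) \<otimes>\<^bsub>GrPq G\<^esub> (u \<otimes>\<^bsub>GrPq G\<^esub> pq_class G w)"
      using s uc w by (simp add: GR.m_assoc)
    also have "\<dots> = pq_class G (l # w) \<otimes>\<^bsub>GrPq G\<^esub> u"
      using l w uc by (simp add: Cons.IH[OF w] pq_class_Cons_sigma GR.m_assoc)
    finally show ?case .
  qed
  then show ?thesis using w by simp
qed

lemma A_carrier: "carrier (A_grp G) = pq_kernel" by (simp add: A_grp_def)
lemma A_mult: "x \<otimes>\<^bsub>A_grp G\<^esub> y = x \<otimes>\<^bsub>GrPq G\<^esub> y" by (simp add: A_grp_def)
lemma A_one: "\<one>\<^bsub>A_grp G\<^esub> = \<one>\<^bsub>GrPq G\<^esub>" by (simp add: A_grp_def)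
lemma pq_kernel_carrier: "x \<in> pq_kernel \<Longrightarrow> x \<in> carrier (GrPq G)" by (simp add: kernel_def)

lemma comm_group_A: "comm_group (A_grp G)"
proof -
  have g: "group (A_grp G)" unfolding A_grp_def
    by (rule subgroup.subgroup_is_group[OF subgroup_pq_kernel GR.is_group])
  show ?thesis
  proof (rule group.group_comm_groupI[OF g])
    fix x y assume "x \<in> carrier (A_grp G)" "y \<in> carrier (A_grp G)"
    then show "x \<otimes>\<^bsub>A_grp G\<^esub> y = y \<otimes>\<^bsub>A_grp G\<^esub> x"
      using pq_kernel_central by (simp add: A_grp_def kernel_def)
  qed
qed

lemma group_A: "group (A_grp G)"
  using comm_group_A comm_group.axioms(2) by blast

end

section \<open>The bar complex in low degrees\<close>

definition bar_cells :: "('a, 'b) monoid_scheme \<Rightarrow> nat \<Rightarrow> 'a list set" where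
  "bar_cells G n = {x. length x = n \<and> set x \<subseteq> carrier G}"

lemma chain_grp_eq: "chain_grp G n = free_ab (bar_cells G n)"
  by (simp add: chain_grp_def free_ab_def bar_cells_def)

lemma bar_coeff_nonzero:
  assumes "bar_coeff G x y \<noteq> 0"
  shows "\<exists>i\<in>{0..length x}. bar_face G i x = y"
proof (rule ccontr)
  assume "\<not> ?thesis"
  then have "bar_coeff G x y = 0" unfolding bar_coeff_def by (auto intro: sum.neutral)
  then show False using assms by simp
qed

lemma bar_d_nonzero:
  assumes "bar_d G f y \<noteq> 0"
  shows "\<exists>x. f x \<noteq> 0 \<and> bar_coeff G x y \<noteq> 0"
proof (rule ccontr)
  assume "\<not> ?thesis"
  then have "bar_d G f y = 0" unfolding bar_d_def by (intro sum.neutral) auto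
  then show False using assms by simp
qed

lemma bar_d_add:
  assumes f: "f \<in> carrier (free_ab V)" and g: "g \<in> carrier (free_ab V)"
  shows "bar_d G (\<lambda>x. f x + g x) = (\<lambda>y. bar_d G f y + bar_d G g y)"
proof
  fix y
  let ?S = "{x. f x \<noteq> 0} \<union> {x. g x \<noteq> 0}"
  have fS: "finite ?S" using f g by (simp add: free_ab_carrier)
  have "bar_d G (\<lambda>x. f x + g x) y = (\<Sum>x\<in>?S. (f x + g x) * bar_coeff G x y)"
    unfolding bar_d_def by (rule sum_over_support[OF fS]) auto
  also have "\<dots> = (\<Sum>x\<in>?S. f x * bar_coeff G x y) + (\<Sum>x\<in>?S. g x * bar_coeff G x y)"
    by (simp add: distrib_right sum.distrib)
  also have "(\<Sum>x\<in>?S. f x * bar_coeff G x y) = bar_d G f y"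
    unfolding bar_d_def by (rule sum_over_support[OF fS, symmetric]) auto
  also have "(\<Sum>x\<in>?S. g x * bar_coeff G x y) = bar_d G g y"
    unfolding bar_d_def by (rule sum_over_support[OF fS, symmetric]) auto
  finally show "bar_d G (\<lambda>x. f x + g x) y = bar_d G f y + bar_d G g y" .
qed

lemma bar_d_basis: "bar_d G (basis k p) = (\<lambda>y. k * bar_coeff G p y)"
proof (cases "k = 0")
  case True
  then show ?thesis by (simp add: bar_d_def basis_def)
next
  case False
  then have "{x. basis k p x \<noteq> 0} = {p}" by (auto simp: basis_def)
  then show ?thesis by (simp add: bar_d_def basis_def)
qed

lemma bar_coeff_length_1: "bar_coeff G [x] y = 0"
  by (simp add: bar_coeff_def bar_face_def)

lemma cycles_1_eq: "cycles G 1 = carrier (chain_grp G 1)"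
proof -
  have "bar_d G f = (\<lambda>_. 0)" if "f \<in> carrier (chain_grp G 1)" for f
  proof
    fix y
    have "\<And>x. f x \<noteq> 0 \<Longrightarrow> bar_coeff G x y = 0"
      using that by (auto simp: chain_grp_def length_Suc_conv bar_coeff_length_1)
    then show "bar_d G f y = 0" unfolding bar_d_def by (auto intro: sum.neutral)
  qed
  then show ?thesis by (auto simp: cycles_def)
qed

context group
begin

lemma bar_coeff_length_2: "bar_coeff G [x, z] y =
   (if y = [z] then 1 else 0) - (if y = [x \<otimes> z] then 1 else 0) + (if y = [x] then 1 else 0)"
proof -
  have s: "{0..length [x, z]} = {0, 1, 2::nat}" by auto
  show ?thesis unfolding bar_coeff_def s by (auto simp: bar_face_def)
qed

lemma bar_coeff_length_3: "bar_coeff G [x, z, t] y =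
   (if y = [z, t] then 1 else 0) - (if y = [x \<otimes> z, t] then 1 else 0)
   + (if y = [x, z \<otimes> t] then 1 else 0) - (if y = [x, z] then 1 else 0)"
proof -
  have s: "{0..length [x, z, t]} = {0, 1, 2, 3::nat}" by auto
  show ?thesis unfolding bar_coeff_def s by (auto simp: bar_face_def)
qed

lemma bar_face_bar_cells:
  assumes x: "x \<in> bar_cells G (Suc n)" and i: "i \<le> Suc n"
  shows "bar_face G i x \<in> bar_cells G n"
proof -
  have lx: "length x = Suc n" and sx: "set x \<subseteq> carrier G" using x by (auto simp: bar_cells_def)
  show ?thesis
  proof (cases "i = 0")
    case True
    then show ?thesis using lx sx by (auto simp: bar_face_def bar_cells_def dest: list.set_sel(2)[rotated])
  next
    case False
    show ?thesis
    proof (cases "i = Suc n")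
      case True
      then show ?thesis using lx sx False by (auto simp: bar_face_def bar_cells_def dest: in_set_butlastD)
    next
      case ni: False
      have i1: "i - 1 < length x" "i < length x" using i ni lx False by auto
      have c: "x ! (i - 1) \<otimes> x ! i \<in> carrier G" using i1 sx nth_mem by blast
      have "length (take (i - 1) x @ [x ! (i - 1) \<otimes> x ! i] @ drop (i + 1) x) = n"
        using lx i ni False by auto
      moreover have "set (take (i - 1) x @ [x ! (i - 1) \<otimes> x ! i] @ drop (i + 1) x) \<subseteq> carrier G"
        using sx c set_take_subset[of "i - 1" x] set_drop_subset[of "i + 1" x] by auto
      ultimately show ?thesis using False ni lx by (simp add: bar_face_def bar_cells_def)
    qed
  qed
qed

lemma bar_d_carrier:
  assumes f: "f \<in> carrier (free_ab (bar_cells G (Suc n)))"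
  shows "bar_d G f \<in> carrier (free_ab (bar_cells G n))"
proof -
  have fin: "finite {x. f x \<noteq> 0}" and fv: "\<And>x. f x \<noteq> 0 \<Longrightarrow> x \<in> bar_cells G (Suc n)"
    using f by (auto simp: free_ab_carrier)
  have sub: "{y. bar_d G f y \<noteq> 0} \<subseteq> (\<Union>x\<in>{x. f x \<noteq> 0}. (\<lambda>i. bar_face G i x) ` {0..length x})"
  proof
    fix y assume "y \<in> {y. bar_d G f y \<noteq> 0}"
    then obtain x where "f x \<noteq> 0" "bar_coeff G x y \<noteq> 0" using bar_d_nonzero by blast
    then show "y \<in> (\<Union>x\<in>{x. f x \<noteq> 0}. (\<lambda>i. bar_face G i x) ` {0..length x})"
      using bar_coeff_nonzero by fastforce
  qed
  have "finite {y. bar_d G f y \<noteq> 0}" by (rule finite_subset[OF sub]) (use fin in auto)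
  moreover have "bar_d G f y \<noteq> 0 \<longrightarrow> y \<in> bar_cells G n" for y
  proof
    assume "bar_d G f y \<noteq> 0"
    then obtain x where x: "f x \<noteq> 0" "bar_coeff G x y \<noteq> 0" using bar_d_nonzero by blast
    then obtain i where i: "i \<in> {0..length x}" "bar_face G i x = y" using bar_coeff_nonzero by blast
    have "x \<in> bar_cells G (Suc n)" using fv x by blast
    moreover then have "i \<le> Suc n" using i by (simp add: bar_cells_def)
    ultimately show "y \<in> bar_cells G n" using bar_face_bar_cells i by blast
  qed
  ultimately show ?thesis by (simp add: free_ab_carrier)
qed

lemma bar_d_hom: "bar_d G \<in> hom (free_ab (bar_cells G (Suc n))) (free_ab (bar_cells G n))"
proof (rule homI)
  fix f assume "f \<in> carrier (free_ab (bar_cells G (Suc n)))"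
  then show "bar_d G f \<in> carrier (free_ab (bar_cells G n))" by (rule bar_d_carrier)
next
  fix f g assume "f \<in> carrier (free_ab (bar_cells G (Suc n)))" "g \<in> carrier (free_ab (bar_cells G (Suc n)))"
  then show "bar_d G (f \<otimes>\<^bsub>free_ab (bar_cells G (Suc n))\<^esub> g) = bar_d G f \<otimes>\<^bsub>free_ab (bar_cells G n)\<^esub> bar_d G g"
    by (simp add: bar_d_add)
qed

end

context pq_group
begin

abbreviation "C1 \<equiv> free_ab (bar_cells G (Suc 0))"
abbreviation "C2 \<equiv> free_ab (bar_cells G 2)"
abbreviation "C3 \<equiv> free_ab (bar_cells G 3)"
abbreviation "ZCl \<equiv> free_ab (conj_classes G)"

end

section \<open>The factor set of \<sigma> and the factor chain\<close>

definition factor_set :: "('a, 'b) monoid_scheme \<Rightarrow> 'a \<Rightarrow> 'a \<Rightarrow> 'a word set" where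
  "factor_set G x y = sigma G x \<otimes>\<^bsub>GrPq G\<^esub> sigma G y \<otimes>\<^bsub>GrPq G\<^esub> inv\<^bsub>GrPq G\<^esub> sigma G (x \<otimes>\<^bsub>G\<^esub> y)"

context pq_group
begin

lemma factor_set_carrier: "x \<in> carrier G \<Longrightarrow> y \<in> carrier G \<Longrightarrow> factor_set G x y \<in> carrier (GrPq G)"
  by (simp add: factor_set_def)

lemma factor_set_kernel: "x \<in> carrier G \<Longrightarrow> y \<in> carrier G \<Longrightarrow> factor_set G x y \<in> pq_kernel"
proof -
  assume x: "x \<in> carrier G" and y: "y \<in> carrier G"
  interpret e: group_hom "GrPq G" G "pq_eps G" by (rule group_hom_pq_eps)
  have "pq_eps G (factor_set G x y) = x \<otimes> y \<otimes> inv (x \<otimes> y)" using x y by (simp add: factor_set_def)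
  also have "\<dots> = \<one>" using x y by simp
  finally show ?thesis using x y by (simp add: kernel_def factor_set_carrier)
qed

lemma factor_set_one_one: "factor_set G \<one> \<one> = \<one>\<^bsub>GrPq G\<^esub>"
  by (simp add: factor_set_def sigma_one)

lemma factor_set_inv: "g \<in> carrier G \<Longrightarrow> factor_set G g (inv g) = \<one>\<^bsub>GrPq G\<^esub>"
  by (simp add: factor_set_def sigma_one sigma_inv)

lemma factor_set_int_pow: "a \<in> carrier G \<Longrightarrow> factor_set G (a [^] (n::int)) a = \<one>\<^bsub>GrPq G\<^esub>"
proof -
  assume a: "a \<in> carrier G"
  have e: "a [^] n \<otimes> a = a [^] (n + 1)" using a by (simp add: int_pow_mult)
  have "sigma G (a [^] (n + 1)) = sigma G a [^]\<^bsub>GrPq G\<^esub> n \<otimes>\<^bsub>GrPq G\<^esub> sigma G a"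
    using a by (simp add: sigma_int_pow GR.int_pow_mult)
  then show ?thesis using a by (simp add: factor_set_def e sigma_int_pow)
qed

lemma factor_set_conj: "g \<in> carrier G \<Longrightarrow> a \<in> carrier G \<Longrightarrow>
   factor_set G g a \<otimes>\<^bsub>GrPq G\<^esub> factor_set G (g \<otimes> a) (inv g) = \<one>\<^bsub>GrPq G\<^esub>"
proof -
  assume g: "g \<in> carrier G" and a: "a \<in> carrier G"
  let ?s = "sigma G"
  have c: "?s g \<in> carrier (GrPq G)" "?s a \<in> carrier (GrPq G)" "?s (g \<otimes> a) \<in> carrier (GrPq G)"
    using g a by auto
  have "factor_set G g a \<otimes>\<^bsub>GrPq G\<^esub> factor_set G (g \<otimes> a) (inv g)
     = ?s g \<otimes>\<^bsub>GrPq G\<^esub> ?s a \<otimes>\<^bsub>GrPq G\<^esub> inv\<^bsub>GrPq G\<^esub> ?s (g \<otimes> a) \<otimes>\<^bsub>GrPq G\<^esub>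
       (?s (g \<otimes> a) \<otimes>\<^bsub>GrPq G\<^esub> inv\<^bsub>GrPq G\<^esub> ?s g \<otimes>\<^bsub>GrPq G\<^esub> inv\<^bsub>GrPq G\<^esub> (?s g \<otimes>\<^bsub>GrPq G\<^esub> ?s a \<otimes>\<^bsub>GrPq G\<^esub> inv\<^bsub>GrPq G\<^esub> ?s g))"
    using g a by (simp add: factor_set_def sigma_inv sigma_conj)
  also have "\<dots> = \<one>\<^bsub>GrPq G\<^esub>"
    using c by (simp add: GR.m_assoc GR.inv_mult_group)
  finally show ?thesis .
qed

lemma factor_set_cocycle: "x \<in> carrier G \<Longrightarrow> y \<in> carrier G \<Longrightarrow> z \<in> carrier G \<Longrightarrow>
   factor_set G x y \<otimes>\<^bsub>GrPq G\<^esub> factor_set G (x \<otimes> y) z = factor_set G y z \<otimes>\<^bsub>GrPq G\<^esub> factor_set G x (y \<otimes> z)"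
proof -
  assume x: "x \<in> carrier G" and y: "y \<in> carrier G" and z: "z \<in> carrier G"
  let ?s = "sigma G"
  have c: "?s x \<in> carrier (GrPq G)" "?s y \<in> carrier (GrPq G)" "?s z \<in> carrier (GrPq G)"
     "?s (x \<otimes> y) \<in> carrier (GrPq G)" "?s (y \<otimes> z) \<in> carrier (GrPq G)" "?s (x \<otimes> y \<otimes> z) \<in> carrier (GrPq G)"
    using x y z by auto
  have "?s x \<otimes>\<^bsub>GrPq G\<^esub> factor_set G y z \<otimes>\<^bsub>GrPq G\<^esub> inv\<^bsub>GrPq G\<^esub> ?s x
        = factor_set G y z \<otimes>\<^bsub>GrPq G\<^esub> ?s x \<otimes>\<^bsub>GrPq G\<^esub> inv\<^bsub>GrPq G\<^esub> ?s x"
    by (simp only: pq_kernel_central[OF factor_set_kernel[OF y z] c(1)])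
  also have "\<dots> = factor_set G y z" using c factor_set_carrier[OF y z] by (simp add: GR.m_assoc)
  finally have cen: "factor_set G y z = ?s x \<otimes>\<^bsub>GrPq G\<^esub> factor_set G y z \<otimes>\<^bsub>GrPq G\<^esub> inv\<^bsub>GrPq G\<^esub> ?s x" by simp
  have "factor_set G x y \<otimes>\<^bsub>GrPq G\<^esub> factor_set G (x \<otimes> y) z
      = ?s x \<otimes>\<^bsub>GrPq G\<^esub> ?s y \<otimes>\<^bsub>GrPq G\<^esub> ?s z \<otimes>\<^bsub>GrPq G\<^esub> inv\<^bsub>GrPq G\<^esub> ?s (x \<otimes> y \<otimes> z)"
    using c by (simp add: factor_set_def GR.m_assoc)
  also have "\<dots> = (?s x \<otimes>\<^bsub>GrPq G\<^esub> factor_set G y z \<otimes>\<^bsub>GrPq G\<^esub> inv\<^bsub>GrPq G\<^esub> ?s x) \<otimes>\<^bsub>GrPq G\<^esub> factor_set G x (y \<otimes> z)"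
    using c x y z by (simp add: factor_set_def GR.m_assoc m_assoc)
  also have "\<dots> = factor_set G y z \<otimes>\<^bsub>GrPq G\<^esub> factor_set G x (y \<otimes> z)" using cen by simp
  finally show ?thesis .
qed

end

definition factor_chain :: "('a, 'b) monoid_scheme \<Rightarrow> ('a list \<Rightarrow> int) \<Rightarrow> 'a word set" where
  "factor_chain G = lin_ext (A_grp G) (\<lambda>p. factor_set G (p ! 0) (p ! 1))"

context pq_group
begin

lemma bar_cells_2: "p \<in> bar_cells G 2 \<longleftrightarrow> (\<exists>x y. p = [x, y] \<and> x \<in> carrier G \<and> y \<in> carrier G)"
  by (auto simp: bar_cells_def numeral_2_eq_2 length_Suc_conv)
lemma bar_cells_3: "p \<in> bar_cells G 3 \<longleftrightarrow> (\<exists>x y z. p = [x, y, z] \<and> x \<in> carrier G \<and> y \<in> carrier G \<and> z \<in> carrier G)"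
  by (auto simp: bar_cells_def numeral_3_eq_3 length_Suc_conv)
lemma bar_cells_1: "p \<in> bar_cells G (Suc 0) \<longleftrightarrow> (\<exists>x. p = [x] \<and> x \<in> carrier G)"
  by (auto simp: bar_cells_def length_Suc_conv)

lemma factor_chain_hom: "factor_chain G \<in> hom C2 (A_grp G)"
  unfolding factor_chain_def
  by (rule comm_group.lin_ext_hom[OF comm_group_A]) (auto simp: bar_cells_2 A_carrier factor_set_kernel)

lemma group_hom_factor_chain: "group_hom C2 (A_grp G) (factor_chain G)"
  by (simp add: group_hom_def group_hom_axioms_def group_A factor_chain_hom free_ab.is_group)

lemma group_hom_bar_d: "group_hom (free_ab (bar_cells G (Suc n))) (free_ab (bar_cells G n)) (bar_d G)"
  by (simp add: group_hom_def group_hom_axioms_def bar_d_hom free_ab.is_group)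

lemma factor_chain_basis:
  "x \<in> carrier G \<Longrightarrow> y \<in> carrier G \<Longrightarrow> factor_chain G (basis k [x, y]) = factor_set G x y [^]\<^bsub>A_grp G\<^esub> k"
  unfolding factor_chain_def
    using comm_group.lin_ext_basis[OF comm_group_A, of "\<lambda>p. factor_set G (p ! 0) (p ! 1)" "[x, y]" k]
  by (simp add: A_carrier factor_set_kernel)

lemma factor_chain_basis_1: "x \<in> carrier G \<Longrightarrow> y \<in> carrier G \<Longrightarrow> factor_chain G (basis 1 [x, y]) = factor_set G x y"
  using factor_chain_basis[of x y 1] group.int_pow_1[OF group_A, of "factor_set G x y"]
    by (simp add: A_carrier factor_set_kernel)

lemma basis_bar_cells_2 [simp]: "x \<in> carrier G \<Longrightarrow> y \<in> carrier G \<Longrightarrow> basis k [x, y] \<in> carrier C2"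
  by (rule basis_carrier) (simp add: bar_cells_2)

lemma basis_bar_cells_1 [simp]: "x \<in> carrier G \<Longrightarrow> basis k [x] \<in> carrier C1"
  by (rule basis_carrier) (simp add: bar_cells_def)

lemma bar_d_basis_3: "x \<in> carrier G \<Longrightarrow> y \<in> carrier G \<Longrightarrow> z \<in> carrier G \<Longrightarrow>
  bar_d G (basis 1 [x, y, z]) = basis 1 [y, z] \<otimes>\<^bsub>C2\<^esub> inv\<^bsub>C2\<^esub> basis 1 [x \<otimes> y, z]
     \<otimes>\<^bsub>C2\<^esub> basis 1 [x, y \<otimes> z] \<otimes>\<^bsub>C2\<^esub> inv\<^bsub>C2\<^esub> basis 1 [x, y]"
  by (simp add: bar_d_basis bar_coeff_length_3 free_ab_inv) (simp add: fun_eq_iff basis_def)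

lemma bar_d_basis_2:
  "bar_d G (basis 1 [x, y]) =
     (\<lambda>p. (if p = [y] then 1 else 0) - (if p = [x \<otimes> y] then 1 else 0) + (if p = [x] then 1 else 0))"
  by (simp add: bar_d_basis bar_coeff_length_2 fun_eq_iff)

lemma factor_chain_bar_d: "z \<in> carrier C3 \<Longrightarrow> factor_chain G (bar_d G z) = \<one>\<^bsub>A_grp G\<^esub>"
proof -
  assume z: "z \<in> carrier C3"
  interpret T: group_hom C2 "A_grp G" "factor_chain G" by (rule group_hom_factor_chain)
  interpret A: comm_group "A_grp G" by (rule comm_group_A)
  have h1: "factor_chain G \<circ> bar_d G \<in> hom C3 (A_grp G)"
    using Group.hom_compose[OF bar_d_hom[of 2] factor_chain_hom] by (simp add: comp_def)
  have h2: "(\<lambda>_. \<one>\<^bsub>A_grp G\<^esub>) \<in> hom C3 (A_grp G)" by (rule homI) auto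
  have "(factor_chain G \<circ> bar_d G) z = (\<lambda>_. \<one>\<^bsub>A_grp G\<^esub>) z"
  proof (rule free_ab_hom_eqI[OF h1 h2 group_A _ z])
    fix v assume "v \<in> bar_cells G 3"
    then obtain x y w where v: "v = [x, y, w]" "x \<in> carrier G" "y \<in> carrier G" "w \<in> carrier G"
      by (auto simp: bar_cells_3)
    have t: "factor_set G x y \<in> carrier (A_grp G)" "factor_set G (x \<otimes> y) w \<in> carrier (A_grp G)"
       "factor_set G y w \<in> carrier (A_grp G)" "factor_set G x (y \<otimes> w) \<in> carrier (A_grp G)"
      using v by (simp_all add: A_carrier factor_set_kernel)
    have "(factor_chain G \<circ> bar_d G) (basis 1 v) = factor_set G y w \<otimes>\<^bsub>A_grp G\<^esub> inv\<^bsub>A_grp G\<^esub> factor_set G (x \<otimes> y) w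
        \<otimes>\<^bsub>A_grp G\<^esub> factor_set G x (y \<otimes> w) \<otimes>\<^bsub>A_grp G\<^esub> inv\<^bsub>A_grp G\<^esub> factor_set G x y"
      using v
        by (simp only: comp_def bar_d_basis_3) (simp del: free_ab_mult free_ab_inv add: factor_chain_basis_1)
    also have "\<dots> = (factor_set G y w \<otimes>\<^bsub>A_grp G\<^esub> factor_set G x (y \<otimes> w)) \<otimes>\<^bsub>A_grp G\<^esub>
        inv\<^bsub>A_grp G\<^esub> (factor_set G x y \<otimes>\<^bsub>A_grp G\<^esub> factor_set G (x \<otimes> y) w)"
      using t by (simp add: A.inv_mult A.m_ac)
    also have "\<dots> = \<one>\<^bsub>A_grp G\<^esub>"
      using v t factor_set_cocycle[of x y w] by (simp add: A_mult[symmetric])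
    finally show "(factor_chain G \<circ> bar_d G) (basis 1 v) = (\<lambda>_. \<one>\<^bsub>A_grp G\<^esub>) (basis 1 v)" by simp
  qed
  then show ?thesis by simp
qed

end

definition class_chain :: "('a, 'b) monoid_scheme \<Rightarrow> ('a list \<Rightarrow> int) \<Rightarrow> ('a set \<Rightarrow> int)" where
  "class_chain G x = (\<lambda>C. \<Sum>p\<in>{p. x p \<noteq> 0}. x p * (if conj_class G (hd p) = C then 1 else 0))"

definition class_rep :: "'a set \<Rightarrow> 'a" where
  "class_rep C = (SOME a. a \<in> C)"

definition class_section :: "('a, 'b) monoid_scheme \<Rightarrow> ('a set \<Rightarrow> int) \<Rightarrow> ('a list \<Rightarrow> int)" where
  "class_section G F = (\<lambda>p. if (\<exists>a. p = [a] \<and> a \<in> carrier G \<and> class_rep (conj_class G a) = a)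
                  then F (conj_class G (hd p)) else 0)"

context group
begin

lemma conj_class_self: "a \<in> carrier G \<Longrightarrow> a \<in> conj_class G a"
  unfolding conj_class_def by (rule CollectI, rule exI[of _ \<one>]) simp

lemma conj_class_sub: "a \<in> carrier G \<Longrightarrow> conj_class G a \<subseteq> carrier G"
  by (auto simp: conj_class_def)

lemma conj_class_eq:
  assumes a: "a \<in> carrier G" and b: "b \<in> conj_class G a"
  shows "conj_class G b = conj_class G a"
proof -
  obtain g where g: "g \<in> carrier G" "b = g \<otimes> a \<otimes> inv g" using b by (auto simp: conj_class_def)
  have bc: "b \<in> carrier G" using g a by simp
  show ?thesis
  proof (intro Set.set_eqI iffI)
    fix x assume "x \<in> conj_class G b"
    then obtain h where h: "h \<in> carrier G" "x = h \<otimes> b \<otimes> inv h" by (auto simp: conj_class_def)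
    have "x = (h \<otimes> g) \<otimes> a \<otimes> inv (h \<otimes> g)" using g h a by (simp add: m_assoc inv_mult_group)
    then show "x \<in> conj_class G a" using g h unfolding conj_class_def by blast
  next
    fix x assume "x \<in> conj_class G a"
    then obtain h where h: "h \<in> carrier G" "x = h \<otimes> a \<otimes> inv h" by (auto simp: conj_class_def)
    have "x = (h \<otimes> inv g) \<otimes> b \<otimes> inv (h \<otimes> inv g)" using g h a by (simp add: m_assoc inv_mult_group)
    then show "x \<in> conj_class G b" using g h unfolding conj_class_def by blast
  qed
qed

lemma class_rep_mem: "a \<in> carrier G \<Longrightarrow> class_rep (conj_class G a) \<in> conj_class G a"
  unfolding class_rep_def by (rule someI, rule conj_class_self)

lemma class_rep_carrier [simp]: "a \<in> carrier G \<Longrightarrow> class_rep (conj_class G a) \<in> carrier G"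
  using class_rep_mem conj_class_sub by blast

lemma conj_class_class_rep [simp]: "a \<in> carrier G \<Longrightarrow> conj_class G (class_rep (conj_class G a)) = conj_class G a"
  using conj_class_eq class_rep_mem by blast

lemma class_rep_conj: "a \<in> carrier G \<Longrightarrow> \<exists>g\<in>carrier G. class_rep (conj_class G a) = g \<otimes> a \<otimes> inv g"
  using class_rep_mem by (auto simp: conj_class_def)

end

context pq_group
begin

lemma class_chain_eq_sum:
  assumes "finite S" "{p. x p \<noteq> 0} \<subseteq> S"
  shows "class_chain G x C = (\<Sum>p\<in>S. x p * (if conj_class G (hd p) = C then 1 else 0))"
  unfolding class_chain_def by (rule sum_over_support[OF assms])

lemma class_chain_nonzero: "class_chain G x C \<noteq> 0 \<Longrightarrow> \<exists>p. x p \<noteq> 0 \<and> conj_class G (hd p) = C"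
proof (rule ccontr)
  assume "\<not> (\<exists>p. x p \<noteq> 0 \<and> conj_class G (hd p) = C)"
  then have "class_chain G x C = 0" unfolding class_chain_def by (intro sum.neutral) auto
  moreover assume "class_chain G x C \<noteq> 0"
  ultimately show False by simp
qed

lemma class_chain_hom: "class_chain G \<in> hom C1 ZCl"
proof (rule homI)
  fix x assume x: "x \<in> carrier C1"
  have fin: "finite {p. x p \<noteq> 0}" and xv: "\<And>p. x p \<noteq> 0 \<Longrightarrow> p \<in> bar_cells G (Suc 0)"
    using x by (auto simp: free_ab_carrier)
  have "{C. class_chain G x C \<noteq> 0} \<subseteq> (\<lambda>p. conj_class G (hd p)) ` {p. x p \<noteq> 0}"
    using class_chain_nonzero by blast
  then have "finite {C. class_chain G x C \<noteq> 0}" using fin by (meson finite_imageI finite_subset)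
  moreover have "class_chain G x C \<noteq> 0 \<longrightarrow> C \<in> conj_classes G" for C
  proof
    assume "class_chain G x C \<noteq> 0"
    then obtain p where p: "x p \<noteq> 0" "conj_class G (hd p) = C" using class_chain_nonzero by blast
    then have "hd p \<in> carrier G" using xv[OF p(1)] by (auto simp: bar_cells_1)
    then show "C \<in> conj_classes G" using p by (auto simp: conj_classes_def)
  qed
  ultimately show "class_chain G x \<in> carrier ZCl" by (simp add: free_ab_carrier)
next
  fix f g assume f: "f \<in> carrier C1" and g: "g \<in> carrier C1"
  show "class_chain G (f \<otimes>\<^bsub>C1\<^esub> g) = class_chain G f \<otimes>\<^bsub>ZCl\<^esub> class_chain G g"
  proof (simp, rule ext)
    fix C
    let ?S = "{x. f x \<noteq> 0} \<union> {x. g x \<noteq> 0}"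
    have fS: "finite ?S" using f g by (simp add: free_ab_carrier)
    have "class_chain G (\<lambda>x. f x + g x) C = (\<Sum>p\<in>?S. (f p + g p) * (if conj_class G (hd p) = C then 1 else 0))"
      by (rule class_chain_eq_sum[OF fS]) auto
    also have "\<dots> = (\<Sum>p\<in>?S. f p * (if conj_class G (hd p) = C then 1 else 0))
                  + (\<Sum>p\<in>?S. g p * (if conj_class G (hd p) = C then 1 else 0))"
      by (simp add: distrib_right sum.distrib)
    also have "\<dots> = class_chain G f C + class_chain G g C"
      using class_chain_eq_sum[OF fS, of f C] class_chain_eq_sum[OF fS, of g C] by auto
    finally show "class_chain G (\<lambda>x. f x + g x) C = class_chain G f C + class_chain G g C" .
  qed
qed

lemma group_hom_class_chain: "group_hom C1 ZCl (class_chain G)"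
  by (simp add: group_hom_def group_hom_axioms_def class_chain_hom free_ab.is_group)

lemma class_chain_basis: "class_chain G (basis k [a]) = (\<lambda>C. if C = conj_class G a then k else 0)"
proof (cases "k = 0")
  case True
  then have "{x. basis k [a] x \<noteq> 0} = {}" by (auto simp: basis_def)
  then show ?thesis unfolding class_chain_def using True by (simp add: fun_eq_iff)
next
  case False
  then have s: "{x. basis k [a] x \<noteq> 0} = {[a]}" by (auto simp: basis_def)
  show ?thesis unfolding class_chain_def s by (rule ext) (simp add: basis_def)
qed

lemma class_chain_basis_1: "class_chain G (basis 1 [a]) = basis 1 (conj_class G a)"
  unfolding class_chain_basis by (auto simp: basis_def)

lemma class_section_nonzero:
  "class_section G F p \<noteq> 0 \<Longrightarrow>
     \<exists>a. p = [a] \<and> a \<in> carrier G \<and> class_rep (conj_class G a) = a \<and> F (conj_class G a) \<noteq> 0"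
  by (auto simp: class_section_def split: if_splits)

lemma class_section_hom: "class_section G \<in> hom ZCl C1"
proof (rule homI)
  fix F assume F: "F \<in> carrier ZCl"
  have fin: "finite {C. F C \<noteq> 0}" using F by (simp add: free_ab_carrier)
  have "{p. class_section G F p \<noteq> 0} \<subseteq> (\<lambda>C. [class_rep C]) ` {C. F C \<noteq> 0}"
  proof
    fix p assume "p \<in> {p. class_section G F p \<noteq> 0}"
    then obtain a where a: "p = [a]" "a \<in> carrier G" "class_rep (conj_class G a) = a" "F (conj_class G a) \<noteq> 0"
      using class_section_nonzero by blast
    then show "p \<in> (\<lambda>C. [class_rep C]) ` {C. F C \<noteq> 0}" by (metis (mono_tags) image_eqI mem_Collect_eq)
  qed
  then have "finite {p. class_section G F p \<noteq> 0}" using fin by (meson finite_imageI finite_subset)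
  moreover have "class_section G F p \<noteq> 0 \<longrightarrow> p \<in> bar_cells G (Suc 0)" for p
    using class_section_nonzero by (auto simp: bar_cells_1)
  ultimately show "class_section G F \<in> carrier C1" by (simp add: free_ab_carrier)
next
  fix F H
  show "class_section G (F \<otimes>\<^bsub>ZCl\<^esub> H) = class_section G F \<otimes>\<^bsub>C1\<^esub> class_section G H"
  proof (rule ext)
    fix p
    show "class_section G (F \<otimes>\<^bsub>ZCl\<^esub> H) p = (class_section G F \<otimes>\<^bsub>C1\<^esub> class_section G H) p"
    proof (cases "\<exists>a. p = [a] \<and> a \<in> carrier G \<and> class_rep (conj_class G a) = a")
      case True then show ?thesis unfolding class_section_def free_ab_mult by (simp only: if_P)
    next
      case False then show ?thesis unfolding class_section_def free_ab_mult by (simp only: if_not_P) simp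
    qed
  qed
qed

lemma group_hom_class_section: "group_hom ZCl C1 (class_section G)"
  by (simp add: group_hom_def group_hom_axioms_def class_section_hom free_ab.is_group)

lemma class_section_basis_1:
  "a \<in> carrier G \<Longrightarrow> class_section G (basis 1 (conj_class G a)) = basis 1 [class_rep (conj_class G a)]"
proof (rule ext)
  fix p assume a: "a \<in> carrier G"
  let ?r = "class_rep (conj_class G a)"
  show "class_section G (basis 1 (conj_class G a)) p = basis 1 [?r] p"
  proof (cases "p = [?r]")
    case True
    then show ?thesis using a by (auto simp: class_section_def basis_def)
  next
    case False
    have "\<not> (\<exists>b. p = [b] \<and> b \<in> carrier G \<and> class_rep (conj_class G b) = b \<and> conj_class G b = conj_class G a)"
      using False by auto
    then show ?thesis using False by (auto simp: class_section_def basis_def)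
  qed
qed

lemma class_chain_class_section: "F \<in> carrier ZCl \<Longrightarrow> class_chain G (class_section G F) = F"
proof -
  assume F: "F \<in> carrier ZCl"
  have h1: "class_chain G \<circ> class_section G \<in> hom ZCl ZCl"
    by (rule Group.hom_compose[OF class_section_hom class_chain_hom])
  have h2: "(\<lambda>x. x) \<in> hom ZCl ZCl" by (rule homI) auto
  have "(class_chain G \<circ> class_section G) F = (\<lambda>x. x) F"
  proof (rule free_ab_hom_eqI[OF h1 h2 free_ab.is_group _ F])
    fix C assume "C \<in> conj_classes G"
    then obtain a where a: "a \<in> carrier G" "C = conj_class G a" by (auto simp: conj_classes_def)
    show "(class_chain G \<circ> class_section G) (basis 1 C) = basis 1 C"
      using a by (simp add: class_section_basis_1 class_chain_basis_1)
  qed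
  then show ?thesis by simp
qed

end

context pq_group
begin

(* Modulo this subgroup every 1-chain is congruent to the section of its class chain, and the
   relators of B(G) lift into it; this is what makes A(G) -> B(G) -> H_1(G) exact. *)
abbreviation "null_bdry \<equiv> bar_d G ` kernel C2 (A_grp G) (factor_chain G)"

lemma bar_d_hom_2: "bar_d G \<in> hom C2 C1"
  using bar_d_hom[of "Suc 0"] by (simp add: numeral_2_eq_2)

lemma group_hom_bar_d_2: "group_hom C2 C1 (bar_d G)"
  by (simp add: group_hom_def group_hom_axioms_def bar_d_hom_2 free_ab.is_group)

lemma subgroup_null_bdry: "subgroup null_bdry C1"
  by (rule group_hom.subgroup_img_is_subgroup[OF group_hom_bar_d_2
        group_hom.subgroup_kernel[OF group_hom_factor_chain]])

lemma null_bdryI: "q \<in> carrier C2 \<Longrightarrow> factor_chain G q = \<one>\<^bsub>A_grp G\<^esub> \<Longrightarrow> bar_d G q \<in> null_bdry"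
  by (auto simp: kernel_def)

lemma null_bdryE: "x \<in> null_bdry \<Longrightarrow> \<exists>q\<in>carrier C2. factor_chain G q = \<one>\<^bsub>A_grp G\<^esub> \<and> bar_d G q = x"
  by (auto simp: kernel_def)

lemma null_bdry_carrier: "x \<in> null_bdry \<Longrightarrow> x \<in> carrier C1"
  using subgroup.mem_carrier[OF subgroup_null_bdry] by blast

lemma null_bdry_add: "x \<in> null_bdry \<Longrightarrow> y \<in> null_bdry \<Longrightarrow> (\<lambda>p. x p + y p) \<in> null_bdry"
  using subgroup.m_closed[OF subgroup_null_bdry, of x y] by simp

lemma null_bdry_neg: "x \<in> null_bdry \<Longrightarrow> (\<lambda>p. - x p) \<in> null_bdry"
  using subgroup.m_inv_closed[OF subgroup_null_bdry, of x] null_bdry_carrier[of x] by simp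

lemma null_bdry_basic:
  "x \<in> carrier G \<Longrightarrow> y \<in> carrier G \<Longrightarrow> factor_set G x y = \<one>\<^bsub>GrPq G\<^esub> \<Longrightarrow> bar_d G (basis 1 [x, y]) \<in> null_bdry"
  using null_bdryI[of "basis 1 [x, y]"] by (simp add: factor_chain_basis_1 A_one)

lemma null_bdry_one: "basis 1 [\<one>] \<in> null_bdry"
proof -
  have "bar_d G (basis 1 [\<one>, \<one>]) \<in> null_bdry"
    by (rule null_bdry_basic) (simp_all add: factor_set_one_one)
  then show ?thesis by (simp only: bar_d_basis_2) (simp add: basis_def)
qed

lemma null_bdry_conj:
  assumes a: "a \<in> carrier G" and g: "g \<in> carrier G"
  shows "(\<lambda>p. basis 1 [a] p - basis 1 [g \<otimes> a \<otimes> inv g] p) \<in> null_bdry"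
proof -
  have ga: "g \<otimes> a \<in> carrier G" using a g by simp
  let ?q1 = "basis 1 [g, a]" and ?q2 = "basis 1 [g \<otimes> a, inv g]"
  have T12: "factor_chain G (?q1 \<otimes>\<^bsub>C2\<^esub> ?q2) = \<one>\<^bsub>A_grp G\<^esub>"
  proof -
    interpret T: group_hom C2 "A_grp G" "factor_chain G" by (rule group_hom_factor_chain)
    have "factor_chain G (?q1 \<otimes>\<^bsub>C2\<^esub> ?q2) = factor_set G g a \<otimes>\<^bsub>GrPq G\<^esub> factor_set G (g \<otimes> a) (inv g)"
      using a g ga by (simp del: free_ab_mult add: factor_chain_basis_1 A_mult)
    then show ?thesis using factor_set_conj[OF g a] by (simp add: A_one)
  qed
  have c12: "?q1 \<otimes>\<^bsub>C2\<^esub> ?q2 \<in> carrier C2" using a g ga by (simp del: free_ab_mult)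
  have "bar_d G (?q1 \<otimes>\<^bsub>C2\<^esub> ?q2) \<in> null_bdry" by (rule null_bdryI[OF c12 T12])
  moreover have "bar_d G (?q1 \<otimes>\<^bsub>C2\<^esub> ?q2) = bar_d G ?q1 \<otimes>\<^bsub>C1\<^esub> bar_d G ?q2"
    using a g ga by (simp del: free_ab_mult add: group_hom.hom_mult[OF group_hom_bar_d_2])
  ultimately have X: "(\<lambda>p. bar_d G ?q1 p + bar_d G ?q2 p) \<in> null_bdry" by simp
  have Y: "bar_d G (basis 1 [g, inv g]) \<in> null_bdry"
    by (rule null_bdry_basic) (simp_all add: g factor_set_inv)
  have "(\<lambda>p. (bar_d G ?q1 p + bar_d G ?q2 p) + - bar_d G (basis 1 [g, inv g]) p + - basis 1 [\<one>] p)
      = (\<lambda>p. basis 1 [a] p - basis 1 [g \<otimes> a \<otimes> inv g] p)"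
    using g by (simp only: bar_d_basis_2) (simp add: basis_def fun_eq_iff)
  then show ?thesis
    using null_bdry_add[OF null_bdry_add[OF X null_bdry_neg[OF Y]] null_bdry_neg[OF null_bdry_one]] by simp
qed

lemma null_bdry_section_diff:
  assumes x: "x \<in> carrier C1"
  shows "x \<otimes>\<^bsub>C1\<^esub> inv\<^bsub>C1\<^esub> class_section G (class_chain G x) \<in> null_bdry"
proof -
  have hid: "(\<lambda>x. x) \<in> hom C1 C1" by (rule homI) auto
  have hrc: "class_section G \<circ> class_chain G \<in> hom C1 C1"
    by (rule Group.hom_compose[OF class_chain_hom class_section_hom])
  have h: "(\<lambda>x. x \<otimes>\<^bsub>C1\<^esub> inv\<^bsub>C1\<^esub> (class_section G \<circ> class_chain G) x) \<in> hom C1 C1"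
    by (rule free_ab.hom_mult_inv[OF hid hrc free_ab.is_group])
  have "(\<lambda>x. x \<otimes>\<^bsub>C1\<^esub> inv\<^bsub>C1\<^esub> (class_section G \<circ> class_chain G) x) x \<in> null_bdry"
  proof (rule free_ab_hom_into_subgroup[OF h free_ab.is_group subgroup_null_bdry _ x])
    fix v assume "v \<in> bar_cells G (Suc 0)"
    then obtain a where a: "v = [a]" "a \<in> carrier G" by (auto simp: bar_cells_1)
    obtain g where g: "g \<in> carrier G" "class_rep (conj_class G a) = g \<otimes> a \<otimes> inv g"
      using class_rep_conj[OF a(2)] by blast
    have "(\<lambda>x. x \<otimes>\<^bsub>C1\<^esub> inv\<^bsub>C1\<^esub> (class_section G \<circ> class_chain G) x) (basis 1 v)
        = (\<lambda>p. basis 1 [a] p - basis 1 [g \<otimes> a \<otimes> inv g] p)"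
      using a g by (simp add: class_chain_basis_1 class_section_basis_1)
    then show "(\<lambda>x. x \<otimes>\<^bsub>C1\<^esub> inv\<^bsub>C1\<^esub> (class_section G \<circ> class_chain G) x) (basis 1 v) \<in> null_bdry"
      using null_bdry_conj[OF a(2) g(1)] by simp
  qed
  then show ?thesis by simp
qed

lemma null_bdry_int_pow:
  assumes a: "a \<in> carrier G"
  shows "(\<lambda>p. basis n [a] p - basis 1 [a [^] n] p) \<in> null_bdry"
proof -
  have step: "bar_d G (basis 1 [a [^] i, a]) \<in> null_bdry" for i :: int
    by (rule null_bdry_basic) (simp_all add: a factor_set_int_pow)
  have pow_Suc: "a [^] i \<otimes> a = a [^] (i + 1)" for i :: int
    using a by (simp add: int_pow_mult)
  show ?thesis
  proof (induction n rule: int_induct[of _ 0])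
    case base
    have "(\<lambda>p. basis 0 [a] p - basis 1 [a [^] (0::int)] p) = (\<lambda>p. - basis 1 [\<one>] p)"
      by (simp add: basis_def)
    then show ?case using null_bdry_neg[OF null_bdry_one] by simp
  next
    case (step1 i)
    have "(\<lambda>p. (basis i [a] p - basis 1 [a [^] i] p) + bar_d G (basis 1 [a [^] i, a]) p)
        = (\<lambda>p. basis (i + 1) [a] p - basis 1 [a [^] (i + 1)] p)"
      by (simp only: bar_d_basis_2 pow_Suc) (simp add: basis_def fun_eq_iff)
    then show ?case using null_bdry_add[OF step1(2) step[of i]] by simp
  next
    case (step2 i)
    have "(\<lambda>p. (basis i [a] p - basis 1 [a [^] i] p) + - bar_d G (basis 1 [a [^] (i - 1), a]) p)
        = (\<lambda>p. basis (i - 1) [a] p - basis 1 [a [^] (i - 1)] p)"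
      using pow_Suc[of "i - 1"] by (simp only: bar_d_basis_2) (simp add: basis_def fun_eq_iff)
    then show ?case using null_bdry_add[OF step2(2) null_bdry_neg[OF step[of "i - 1"]]] by simp
  qed
qed

end

fun letters_chain :: "'a word \<Rightarrow> 'a list \<Rightarrow> int" where
  "letters_chain [] = (\<lambda>_. 0)"
| "letters_chain (l # w) = (\<lambda>p. basis (if fst l then 1 else -1) [snd l] p + letters_chain w p)"

context pq_group
begin

lemma letters_chain_carrier: "w \<in> pq_words G \<Longrightarrow> letters_chain w \<in> carrier C1"
proof (induction w)
  case Nil then show ?case using free_ab.one_closed by simp
next
  case (Cons l w)
  then have "basis (if fst l then 1 else -1) [snd l] \<otimes>\<^bsub>C1\<^esub> letters_chain w \<in> carrier C1"
    by (simp del: free_ab_mult)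
  then show ?case by simp
qed

lemma sigma_factor_set_shift:
  assumes h: "h \<in> carrier G" and e: "e \<in> carrier G" and U: "U \<in> pq_kernel"
  shows "sigma G h \<otimes>\<^bsub>GrPq G\<^esub> (sigma G e \<otimes>\<^bsub>GrPq G\<^esub> U) = sigma G (h \<otimes> e) \<otimes>\<^bsub>GrPq G\<^esub> (U \<otimes>\<^bsub>GrPq G\<^esub> factor_set G h e)"
proof -
  have Uc: "U \<in> carrier (GrPq G)" using U by (rule pq_kernel_carrier)
  have tc: "factor_set G h e \<in> carrier (GrPq G)" using h e by (rule factor_set_carrier)
  have sc: "sigma G h \<in> carrier (GrPq G)" "sigma G e \<in> carrier (GrPq G)" "sigma G (h \<otimes> e) \<in> carrier (GrPq G)"
    using h e by auto
  have st: "sigma G (h \<otimes> e) \<otimes>\<^bsub>GrPq G\<^esub> factor_set G h e = sigma G h \<otimes>\<^bsub>GrPq G\<^esub> sigma G e"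
  proof -
    have "sigma G (h \<otimes> e) \<otimes>\<^bsub>GrPq G\<^esub> factor_set G h e = factor_set G h e \<otimes>\<^bsub>GrPq G\<^esub> sigma G (h \<otimes> e)"
      using pq_kernel_central[OF factor_set_kernel[OF h e] sc(3)] by (rule HOL.sym)
    also have "\<dots> = sigma G h \<otimes>\<^bsub>GrPq G\<^esub> sigma G e"
      unfolding factor_set_def using sc by (simp add: GR.m_assoc)
    finally show ?thesis .
  qed
  have "sigma G (h \<otimes> e) \<otimes>\<^bsub>GrPq G\<^esub> (U \<otimes>\<^bsub>GrPq G\<^esub> factor_set G h e) = sigma G (h \<otimes> e) \<otimes>\<^bsub>GrPq G\<^esub> (factor_set G h e \<otimes>\<^bsub>GrPq G\<^esub> U)"
    by (simp only: pq_kernel_central[OF factor_set_kernel[OF h e] Uc])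
  also have "\<dots> = (sigma G (h \<otimes> e) \<otimes>\<^bsub>GrPq G\<^esub> factor_set G h e) \<otimes>\<^bsub>GrPq G\<^esub> U"
    using sc tc Uc by (simp only: GR.m_assoc)
  also have "\<dots> = sigma G h \<otimes>\<^bsub>GrPq G\<^esub> sigma G e \<otimes>\<^bsub>GrPq G\<^esub> U" by (simp only: st)
  also have "\<dots> = sigma G h \<otimes>\<^bsub>GrPq G\<^esub> (sigma G e \<otimes>\<^bsub>GrPq G\<^esub> U)"
    using sc Uc by (simp only: GR.m_assoc)
  finally show ?thesis by (rule HOL.sym)
qed

lemma factor_chain_kernel: "c \<in> carrier C2 \<Longrightarrow> factor_chain G c \<in> pq_kernel"
  using group_hom.hom_closed[OF group_hom_factor_chain] by (simp add: A_carrier)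

lemma bar_d_2_carrier: "c \<in> carrier C2 \<Longrightarrow> bar_d G c \<in> carrier C1"
  using group_hom.hom_closed[OF group_hom_bar_d_2] by simp

lemma letter_factor_chain:
  assumes l: "snd l \<in> carrier G" and e: "e \<in> carrier G"
  shows "\<exists>c\<in>carrier C2.
     bar_d G c = (\<lambda>p. letters_chain [l] p + basis 1 [e] p - basis 1 [letter_val G l \<otimes> e] p) \<and>
     factor_chain G c = factor_set G (letter_val G l) e"
proof -
  interpret T: group_hom C2 "A_grp G" "factor_chain G" by (rule group_hom_factor_chain)
  interpret D: group_hom C2 C1 "bar_d G" by (rule group_hom_bar_d_2)
  obtain b g where lg: "l = (b, g)" by (cases l)
  have g: "g \<in> carrier G" using l lg by simp
  show ?thesis
  proof (cases b)
    case True
    have "bar_d G (basis 1 [g, e]) = (\<lambda>p. letters_chain [l] p + basis 1 [e] p - basis 1 [g \<otimes> e] p)"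
      using True lg by (simp add: bar_d_basis_2) (simp add: basis_def fun_eq_iff)
    then show ?thesis
      using True lg g e
        by (intro bexI[of _ "basis 1 [g, e]"]) (simp_all add: letter_val_def factor_chain_basis_1)
  next
    case False
    \<comment> \<open>The cells [g|inv g] and [1|1] have trivial factor set, so subtracting them leaves
       the factor chain unchanged while trading the term [inv g] of the boundary for -[g].\<close>
    let ?c = "basis 1 [inv g, e] \<otimes>\<^bsub>C2\<^esub> basis (-1) [g, inv g] \<otimes>\<^bsub>C2\<^esub> basis (-1) [\<one>, \<one>]"
    have "bar_d G ?c = (\<lambda>p. letters_chain [l] p + basis 1 [e] p - basis 1 [inv g \<otimes> e] p)"
      using False lg g e
      by (simp del: free_ab_mult add: D.hom_mult bar_d_basis bar_coeff_length_2) (simp add: basis_def fun_eq_iff)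
    moreover have "factor_chain G ?c = factor_set G (inv g) e"
    proof -
      have "factor_set G g (inv g) = \<one>\<^bsub>A_grp G\<^esub>" "factor_set G \<one> \<one> = \<one>\<^bsub>A_grp G\<^esub>"
        using g by (simp_all add: factor_set_inv factor_set_one_one A_one)
      then show ?thesis
        using g e factor_set_kernel[OF inv_closed[OF g] e]
        by (simp del: free_ab_mult add: T.hom_mult factor_chain_basis A_carrier)
    qed
    ultimately show ?thesis
      using False lg g e by (intro bexI[of _ ?c]) (simp_all del: free_ab_mult add: letter_val_def)
  qed
qed

lemma word_factor_decomp:
  "w \<in> pq_words G \<Longrightarrow> \<exists>c\<in>carrier C2.
     bar_d G c = (\<lambda>p. letters_chain w p - basis 1 [eval_word G w] p) \<and>
     pq_class G w = sigma G (eval_word G w) \<otimes>\<^bsub>GrPq G\<^esub> factor_chain G c"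
proof (induction w)
  case Nil
  have "bar_d G (basis (-1) [\<one>, \<one>]) = (\<lambda>p. letters_chain [] p - basis 1 [eval_word G []] p)"
    by (simp add: bar_d_basis bar_coeff_length_2) (simp add: basis_def fun_eq_iff)
  moreover have "factor_chain G (basis (-1) [\<one>, \<one>]) = \<one>\<^bsub>GrPq G\<^esub>"
    using group.int_pow_one[OF group_A] by (simp add: factor_chain_basis factor_set_one_one A_one[symmetric])
  ultimately show ?case
    by (intro bexI[of _ "basis (-1) [\<one>, \<one>]"]) (simp_all add: sigma_one pq_class_Nil)
next
  case (Cons l w)
  have l: "snd l \<in> carrier G" and w: "w \<in> pq_words G" using Cons.prems by auto
  define h e where "h = letter_val G l" and "e = eval_word G w"
  have h: "h \<in> carrier G" and e: "e \<in> carrier G" using l w by (simp_all add: h_def e_def)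
  obtain c' where c': "c' \<in> carrier C2" "bar_d G c' = (\<lambda>p. letters_chain w p - basis 1 [e] p)"
    "pq_class G w = sigma G e \<otimes>\<^bsub>GrPq G\<^esub> factor_chain G c'"
    using Cons.IH[OF w] by (auto simp: e_def)
  obtain c where c: "c \<in> carrier C2"
    "bar_d G c = (\<lambda>p. letters_chain [l] p + basis 1 [e] p - basis 1 [h \<otimes> e] p)"
    "factor_chain G c = factor_set G h e"
    using letter_factor_chain[OF l e] by (auto simp: h_def)
  have "bar_d G (c' \<otimes>\<^bsub>C2\<^esub> c) = (\<lambda>p. letters_chain (l # w) p - basis 1 [h \<otimes> e] p)"
    using c c'
      by (simp del: free_ab_mult add: group_hom.hom_mult[OF group_hom_bar_d_2]) (simp add: fun_eq_iff)
  moreover have "pq_class G (l # w) = sigma G (h \<otimes> e) \<otimes>\<^bsub>GrPq G\<^esub> factor_chain G (c' \<otimes>\<^bsub>C2\<^esub> c)"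
  proof -
    have "pq_class G (l # w) = sigma G h \<otimes>\<^bsub>GrPq G\<^esub> (sigma G e \<otimes>\<^bsub>GrPq G\<^esub> factor_chain G c')"
      using l w c'(3) by (simp add: pq_class_Cons_sigma h_def)
    also have "\<dots> = sigma G (h \<otimes> e) \<otimes>\<^bsub>GrPq G\<^esub> (factor_chain G c' \<otimes>\<^bsub>GrPq G\<^esub> factor_set G h e)"
      by (rule sigma_factor_set_shift[OF h e factor_chain_kernel[OF c'(1)]])
    also have "factor_chain G c' \<otimes>\<^bsub>GrPq G\<^esub> factor_set G h e = factor_chain G (c' \<otimes>\<^bsub>C2\<^esub> c)"
      using c c' by (simp del: free_ab_mult add: group_hom.hom_mult[OF group_hom_factor_chain] A_mult)
    finally show ?thesis .
  qed
  moreover have "c' \<otimes>\<^bsub>C2\<^esub> c \<in> carrier C2" using c c' by (simp del: free_ab_mult)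
  ultimately show ?case by (auto simp: h_def e_def)
qed

end

section \<open>The group B(G) and the map A(G) \<rightarrow> B(G)\<close>

definition B_rels :: "('a, 'b) monoid_scheme \<Rightarrow> ('a set \<Rightarrow> int) set" where
  "B_rels G = {B_rel G a n | a n. a \<in> carrier G}"

context pq_group
begin

abbreviation "B_relators \<equiv> generate ZCl (B_rels G)"

lemma class_chain_power_diff:
  assumes a: "a \<in> carrier G"
  shows "class_chain G (\<lambda>p. basis n [a] p - basis 1 [a [^] n] p) = B_rel G a n"
proof -
  interpret c: group_hom C1 ZCl "class_chain G" by (rule group_hom_class_chain)
  have an: "a [^] n \<in> carrier G" using a by simp
  have e: "(\<lambda>p. basis n [a] p - basis 1 [a [^] n] p) = basis n [a] \<otimes>\<^bsub>C1\<^esub> inv\<^bsub>C1\<^esub> basis 1 [a [^] n]"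
    using a an by simp
  have "class_chain G (basis n [a] \<otimes>\<^bsub>C1\<^esub> inv\<^bsub>C1\<^esub> basis 1 [a [^] n])
      = class_chain G (basis n [a]) \<otimes>\<^bsub>ZCl\<^esub> inv\<^bsub>ZCl\<^esub> class_chain G (basis 1 [a [^] n])"
    using a an by (simp del: free_ab_mult free_ab_inv)
  also have "\<dots> = B_rel G a n"
    using a an c.hom_closed[OF basis_bar_cells_1[OF an, of 1]]
      by (simp add: class_chain_basis B_rel_def fun_eq_iff)
  finally show ?thesis using e by simp
qed

lemma B_relators_subset_class_chain: "B_relators \<subseteq> class_chain G ` null_bdry"
proof (rule free_ab.generate_subgroup_incl)
  show "B_rels G \<subseteq> class_chain G ` null_bdry"
  proof
    fix r assume "r \<in> B_rels G"
    then obtain a n where r: "r = B_rel G a n" and a: "a \<in> carrier G" by (auto simp: B_rels_def)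
    show "r \<in> class_chain G ` null_bdry"
      by (rule image_eqI[OF _ null_bdry_int_pow[OF a, of n]]) (simp add: r class_chain_power_diff[OF a])
  qed
  show "subgroup (class_chain G ` null_bdry) ZCl"
    by (rule group_hom.subgroup_img_is_subgroup[OF group_hom_class_chain subgroup_null_bdry])
qed

lemma null_bdry_of_relator:
  assumes x: "x \<in> carrier C1" and r: "class_chain G x \<in> B_relators"
  shows "x \<in> null_bdry"
proof -
  interpret c: group_hom C1 ZCl "class_chain G" by (rule group_hom_class_chain)
  interpret s: group_hom ZCl C1 "class_section G" by (rule group_hom_class_section)
  have "class_chain G x \<in> class_chain G ` null_bdry" using B_relators_subset_class_chain r ..
  then obtain y where xy: "class_chain G x = class_chain G y" and y: "y \<in> null_bdry" by (rule imageE)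
  have yc: "y \<in> carrier C1" using null_bdry_carrier[OF y] .
  let ?z = "x \<otimes>\<^bsub>C1\<^esub> inv\<^bsub>C1\<^esub> y"
  have zc: "?z \<in> carrier C1" using x yc by (simp del: free_ab_mult free_ab_inv)
  have "class_chain G ?z = \<one>\<^bsub>ZCl\<^esub>"
    using x yc xy by (simp del: free_ab_mult free_ab_inv free_ab_one)
  then have "?z \<otimes>\<^bsub>C1\<^esub> inv\<^bsub>C1\<^esub> class_section G (class_chain G ?z) = ?z"
    using zc by (simp del: free_ab_mult free_ab_inv free_ab_one)
  then have "?z \<in> null_bdry" using null_bdry_section_diff[OF zc] by simp
  then have "?z \<otimes>\<^bsub>C1\<^esub> y \<in> null_bdry" using subgroup.m_closed[OF subgroup_null_bdry _ y] by blast
  moreover have "?z \<otimes>\<^bsub>C1\<^esub> y = x" using yc by simp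
  ultimately show ?thesis by simp
qed

end

context pq_group
begin

abbreviation "B_proj \<equiv> (\<lambda>x. B_relators #>\<^bsub>ZCl\<^esub> x)"

lemma B_rel_carrier: "a \<in> carrier G \<Longrightarrow> B_rel G a n \<in> carrier ZCl"
proof -
  assume a: "a \<in> carrier G"
  have "{C. B_rel G a n C \<noteq> 0} \<subseteq> {conj_class G a, conj_class G (a [^] n)}"
    by (auto simp: B_rel_def split: if_splits)
  moreover have "conj_class G a \<in> conj_classes G" "conj_class G (a [^] n) \<in> conj_classes G"
    using a by (auto simp: conj_classes_def)
  ultimately show ?thesis by (auto simp: free_ab_carrier intro: finite_subset)
qed

lemma subgroup_B_relators: "subgroup B_relators ZCl"
  by (rule free_ab.generate_is_subgroup) (auto simp: B_rel_carrier B_rels_def)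

lemma normal_B_relators: "B_relators \<lhd> ZCl"
  by (rule free_ab.subgroup_imp_normal[OF subgroup_B_relators])

lemma B_proj_hom: "B_proj \<in> hom ZCl (ZCl Mod B_relators)"
  by (rule normal.r_coset_hom_Mod[OF normal_B_relators])

lemma B_grp_eq: "B_grp G = ZCl Mod B_relators"
  by (simp add: B_grp_def free_ab_Cl_eq B_rels_def)

lemma group_B: "group (ZCl Mod B_relators)"
  by (rule normal.factorgroup_is_group[OF normal_B_relators])

lemma group_hom_B_proj: "group_hom ZCl (ZCl Mod B_relators) B_proj"
  by (simp add: group_hom_def group_hom_axioms_def B_proj_hom group_B free_ab.is_group)

lemma B_proj_relator: "x \<in> B_relators \<Longrightarrow> B_proj x = B_relators"
  using free_ab.coset_join2[OF _ subgroup_B_relators] subgroup.mem_carrier[OF subgroup_B_relators] by blast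

lemma B_proj_eq_oneD: "x \<in> carrier ZCl \<Longrightarrow> B_proj x = B_relators \<Longrightarrow> x \<in> B_relators"
  using free_ab.rcos_self[OF _ subgroup_B_relators] by force

definition word_B_class :: "'a word \<Rightarrow> ('a set \<Rightarrow> int) set" where
  "word_B_class w = B_proj (class_chain G (letters_chain w))"

lemma letters_chain_append: "letters_chain (u @ v) = (\<lambda>p. letters_chain u p + letters_chain v p)"
  by (induction u) (auto simp: fun_eq_iff)

lemma class_chain_letters_chain_carrier: "w \<in> pq_words G \<Longrightarrow> class_chain G (letters_chain w) \<in> carrier ZCl"
  using group_hom.hom_closed[OF group_hom_class_chain letters_chain_carrier] by blast

lemma word_B_class_append: "u \<in> pq_words G \<Longrightarrow> v \<in> pq_words G \<Longrightarrow>
   word_B_class (u @ v) = word_B_class u \<otimes>\<^bsub>ZCl Mod B_relators\<^esub> word_B_class v"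
proof -
  assume u: "u \<in> pq_words G" and v: "v \<in> pq_words G"
  interpret c: group_hom C1 ZCl "class_chain G" by (rule group_hom_class_chain)
  interpret p: group_hom ZCl "ZCl Mod B_relators" B_proj by (rule group_hom_B_proj)
  have "letters_chain (u @ v) = letters_chain u \<otimes>\<^bsub>C1\<^esub> letters_chain v" by (simp add: letters_chain_append)
  then have "class_chain G (letters_chain (u @ v))
      = class_chain G (letters_chain u) \<otimes>\<^bsub>ZCl\<^esub> class_chain G (letters_chain v)"
    using u v letters_chain_carrier by (simp del: free_ab_mult)
  then show ?thesis unfolding word_B_class_def
    using u v class_chain_letters_chain_carrier by (simp del: free_ab_mult)
qed

lemma B_proj_mult_relator:
  assumes "x \<in> carrier ZCl" "r \<in> B_relators"
  shows "B_proj (x \<otimes>\<^bsub>ZCl\<^esub> r) = B_proj x"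
proof -
  interpret p: group_hom ZCl "ZCl Mod B_relators" B_proj by (rule group_hom_B_proj)
  have rc: "r \<in> carrier ZCl" using assms(2) subgroup.mem_carrier[OF subgroup_B_relators] by blast
  have "B_proj (x \<otimes>\<^bsub>ZCl\<^esub> r) = B_proj x \<otimes>\<^bsub>ZCl Mod B_relators\<^esub> B_proj r"
    using assms(1) rc by (simp del: free_ab_mult)
  moreover have "B_proj r = \<one>\<^bsub>ZCl Mod B_relators\<^esub>"
    using B_proj_relator[OF assms(2)] by (simp add: FactGroup_def)
  ultimately show ?thesis
    using monoid.r_one[OF group.is_monoid[OF group_B] p.hom_closed[OF assms(1)]] by (simp only:)
qed

end

context pq_group
begin

lemma letters_chain_replicate: "letters_chain (replicate m (b, a)) = basis (if b then int m else - int m) [a]"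
  by (induction m) (auto simp: basis_def fun_eq_iff)

lemma letters_chain_sigma_pow_word: "letters_chain (sigma_pow_word a n) = basis n [a]"
  by (simp add: sigma_pow_word_def letters_chain_replicate)

lemma letters_chain_single: "letters_chain [(True, a)] = basis 1 [a]"
  by (simp add: fun_eq_iff)

lemma B_rel_relator: "a \<in> carrier G \<Longrightarrow> B_rel G a n \<in> B_relators"
  by (rule generate.incl) (auto simp: B_rels_def)

lemma B_proj_class_chain_power:
  assumes a: "a \<in> carrier G"
  shows "B_proj (class_chain G (basis n [a])) = B_proj (class_chain G (basis 1 [a [^] n]))"
proof -
  have c: "class_chain G (basis 1 [a [^] n]) \<in> carrier ZCl"
    using group_hom.hom_closed[OF group_hom_class_chain basis_bar_cells_1] a by simp
  have "class_chain G (basis n [a]) = class_chain G (basis 1 [a [^] n]) \<otimes>\<^bsub>ZCl\<^esub> B_rel G a n"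
    by (simp add: class_chain_basis B_rel_def fun_eq_iff)
  then show ?thesis using B_proj_mult_relator[OF c B_rel_relator[OF a]] by simp
qed

lemma word_B_class_pq_eq: "pq_eq G u v \<Longrightarrow> word_B_class u = word_B_class v"
proof (induction rule: pq_eq.induct)
  case (cong u v w1 w2)
  have "u \<in> pq_words G" "v \<in> pq_words G" using cong(1) pq_eq_words by auto
  then show ?case using cong by (simp add: word_B_class_append)
next
  case (cancel x b)
  have "letters_chain [(b, x), (\<not> b, x)] = letters_chain []" by (cases b) (auto simp: basis_def fun_eq_iff)
  then show ?case by (simp add: word_B_class_def)
next
  case (rel_conj a b)
  have "a \<otimes> b \<otimes> inv a \<in> conj_class G b" using rel_conj unfolding conj_class_def by blast
  then have "conj_class G (a \<otimes> b \<otimes> inv a) = conj_class G b" using conj_class_eq rel_conj by blast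
  moreover have "letters_chain [(True, a), (True, b), (False, a)] = basis 1 [b]"
    by (auto simp: basis_def fun_eq_iff)
  ultimately show ?case by (simp add: word_B_class_def letters_chain_single class_chain_basis_1)
next
  case (rel_pow a n)
  then show ?case
    using B_proj_class_chain_power[of a n]
    by (simp add: word_B_class_def letters_chain_sigma_pow_word letters_chain_single)
next
  case rel_unit
  have "basis 0 [\<one>] = (\<lambda>_. 0)" by (simp add: basis_def fun_eq_iff)
  then show ?case
    using B_proj_class_chain_power[of \<one> 0] by (simp add: word_B_class_def letters_chain_single)
qed auto

definition A_to_B :: "'a word set \<Rightarrow> ('a set \<Rightarrow> int) set" where
  "A_to_B = via_rep word_B_class"

lemma A_to_B_class: "w \<in> pq_words G \<Longrightarrow> A_to_B (pq_class G w) = word_B_class w"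
  unfolding A_to_B_def
  by (rule via_rep_eqI) (auto simp: pq_class_def pq_eq.refl dest: word_B_class_pq_eq)

lemma word_B_class_carrier: "w \<in> pq_words G \<Longrightarrow> word_B_class w \<in> carrier (ZCl Mod B_relators)"
  unfolding word_B_class_def
    using group_hom.hom_closed[OF group_hom_B_proj class_chain_letters_chain_carrier] by blast

lemma A_to_B_hom: "A_to_B \<in> hom (A_grp G) (B_grp G)"
  unfolding B_grp_eq
proof (rule homI)
  fix x assume "x \<in> carrier (A_grp G)"
  then obtain w where "w \<in> pq_words G" "x = pq_class G w" by (auto simp: A_carrier kernel_def GrPq_carrier)
  then show "A_to_B x \<in> carrier (ZCl Mod B_relators)" by (simp add: A_to_B_class word_B_class_carrier)
next
  fix x y assume "x \<in> carrier (A_grp G)" "y \<in> carrier (A_grp G)"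
  then obtain u v where "u \<in> pq_words G" "x = pq_class G u" "v \<in> pq_words G" "y = pq_class G v"
    by (auto simp: A_carrier kernel_def GrPq_carrier)
  then show "A_to_B (x \<otimes>\<^bsub>A_grp G\<^esub> y) = A_to_B x \<otimes>\<^bsub>ZCl Mod B_relators\<^esub> A_to_B y"
    by (simp add: A_mult GrPq_mult_class A_to_B_class word_B_class_append)
qed

lemma factor_set_class: "x \<in> carrier G \<Longrightarrow> y \<in> carrier G \<Longrightarrow>
   factor_set G x y = pq_class G [(True, x), (True, y), (False, x \<otimes> y)]"
proof -
  assume x: "x \<in> carrier G" and y: "y \<in> carrier G"
  have "pq_class G [(True, x), (True, y), (False, x \<otimes> y)]
      = sigma G x \<otimes>\<^bsub>GrPq G\<^esub> (sigma G y \<otimes>\<^bsub>GrPq G\<^esub> pq_class G [(False, x \<otimes> y)])"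
    using x y GrPq_mult_class[of "[(True, x)]" "[(True, y), (False, x \<otimes> y)]"]
      GrPq_mult_class[of "[(True, y)]" "[(False, x \<otimes> y)]"] by (simp add: sigma_def)
  also have "\<dots> = factor_set G x y" using x y by (simp add: pq_class_inv_letter factor_set_def GR.m_assoc)
  finally show ?thesis by (rule HOL.sym)
qed

lemma A_to_B_factor_chain: "c \<in> carrier C2 \<Longrightarrow> A_to_B (factor_chain G c) = B_proj (class_chain G (bar_d G c))"
proof -
  assume c: "c \<in> carrier C2"
  have h1: "A_to_B \<circ> factor_chain G \<in> hom C2 (ZCl Mod B_relators)"
    by (rule Group.hom_compose[OF factor_chain_hom A_to_B_hom[unfolded B_grp_eq]])
  have h2: "B_proj \<circ> (class_chain G \<circ> bar_d G) \<in> hom C2 (ZCl Mod B_relators)"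
    by (rule Group.hom_compose[OF Group.hom_compose[OF bar_d_hom_2 class_chain_hom] B_proj_hom])
  have "(A_to_B \<circ> factor_chain G) c = (B_proj \<circ> (class_chain G \<circ> bar_d G)) c"
  proof (rule free_ab_hom_eqI[OF h1 h2 group_B _ c])
    fix v assume "v \<in> bar_cells G 2"
    then obtain x y where v: "v = [x, y]" "x \<in> carrier G" "y \<in> carrier G" by (auto simp: bar_cells_2)
    have w: "[(True, x), (True, y), (False, x \<otimes> y)] \<in> pq_words G" using v by simp
    have "letters_chain [(True, x), (True, y), (False, x \<otimes> y)] = bar_d G (basis 1 [x, y])"
      by (simp only: bar_d_basis_2) (auto simp: basis_def fun_eq_iff)
    then show "(A_to_B \<circ> factor_chain G) (basis 1 v) = (B_proj \<circ> (class_chain G \<circ> bar_d G)) (basis 1 v)"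
      using v w by (simp add: factor_chain_basis_1 factor_set_class A_to_B_class word_B_class_def)
  qed
  then show ?thesis by simp
qed

end

context pq_group
begin

lemma boundaries_1_eq: "boundaries G (Suc 0) = bar_d G ` carrier C2"
  by (simp add: boundaries_def chain_grp_eq numeral_2_eq_2)

lemma boundaries_2_eq: "boundaries G 2 = bar_d G ` carrier C3"
  by (simp add: boundaries_def chain_grp_eq numeral_3_eq_3 numeral_2_eq_2)

lemma subgroup_boundaries_1: "subgroup (boundaries G (Suc 0)) C1"
  unfolding boundaries_1_eq by (rule group_hom.img_is_subgroup[OF group_hom_bar_d_2])

lemma normal_boundaries_1: "boundaries G (Suc 0) \<lhd> C1"
  by (rule free_ab.subgroup_imp_normal[OF subgroup_boundaries_1])

lemma subgroup_boundaries_2: "subgroup (boundaries G 2) C2"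
proof -
  have "group_hom C3 C2 (bar_d G)"
    using group_hom_bar_d[of 2] by (simp add: numeral_3_eq_3 numeral_2_eq_2)
  then show ?thesis unfolding boundaries_2_eq by (rule group_hom.img_is_subgroup)
qed

lemma normal_boundaries_2: "boundaries G 2 \<lhd> C2"
  by (rule free_ab.subgroup_imp_normal[OF subgroup_boundaries_2])

lemma H2_eq: "group_homology G 2 = (C2\<lparr>carrier := cycles G 2\<rparr>) Mod boundaries G 2"
  by (simp add: group_homology_def chain_grp_eq)

lemma cycles_1_carrier: "cycles G (Suc 0) = carrier C1"
  using cycles_1_eq by (simp add: chain_grp_eq)

lemma H1_eq: "group_homology G (Suc 0) = C1 Mod boundaries G (Suc 0)"
  by (simp add: group_homology_def chain_grp_eq cycles_1_carrier FactGroup_def RCOSETS_def set_mult_def fun_eq_iff)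

lemma group_H1: "group (C1 Mod boundaries G (Suc 0))"
  by (rule normal.factorgroup_is_group[OF normal_boundaries_1])

lemma cycles_2_subset: "cycles G 2 \<subseteq> carrier C2"
  by (auto simp: cycles_def chain_grp_eq)

abbreviation "H1_proj \<equiv> (\<lambda>x. boundaries G (Suc 0) #>\<^bsub>C1\<^esub> x)"

lemma H1_proj_hom: "H1_proj \<in> hom C1 (C1 Mod boundaries G (Suc 0))"
  by (rule normal.r_coset_hom_Mod[OF normal_boundaries_1])

lemma H1_proj_boundary: "x \<in> boundaries G (Suc 0) \<Longrightarrow> H1_proj x = boundaries G (Suc 0)"
  using free_ab.coset_join2[OF _ subgroup_boundaries_1] subgroup.mem_carrier[OF subgroup_boundaries_1]
    by blast

lemma H1_proj_eq_oneD: "x \<in> carrier C1 \<Longrightarrow> H1_proj x = boundaries G (Suc 0) \<Longrightarrow> x \<in> boundaries G (Suc 0)"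
  using free_ab.rcos_self[OF _ subgroup_boundaries_1] by force

lemma null_bdry_subset_boundaries: "null_bdry \<subseteq> boundaries G (Suc 0)"
  unfolding boundaries_1_eq by (auto simp: kernel_def)

lemma boundaries_1_add: "x \<in> boundaries G (Suc 0) \<Longrightarrow> y \<in> boundaries G (Suc 0) \<Longrightarrow> (\<lambda>p. x p + y p) \<in> boundaries G (Suc 0)"
  using subgroup.m_closed[OF subgroup_boundaries_1, of x y] by simp

lemma boundaries_1_neg: "x \<in> boundaries G (Suc 0) \<Longrightarrow> (\<lambda>p. - x p) \<in> boundaries G (Suc 0)"
  using subgroup.m_inv_closed[OF subgroup_boundaries_1, of x] subgroup.mem_carrier[OF subgroup_boundaries_1, of x]
    by simp

lemma class_section_class_chain_boundary:
  assumes y: "y \<in> boundaries G (Suc 0)"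
  shows "class_section G (class_chain G y) \<in> boundaries G (Suc 0)"
proof -
  have yc: "y \<in> carrier C1" using y subgroup.mem_carrier[OF subgroup_boundaries_1] by blast
  have rc: "class_section G (class_chain G y) \<in> carrier C1"
    using group_hom.hom_closed[OF group_hom_class_section group_hom.hom_closed[OF group_hom_class_chain yc]] .
  have d: "(\<lambda>p. y p + - class_section G (class_chain G y) p) \<in> boundaries G (Suc 0)"
    using null_bdry_section_diff[OF yc] null_bdry_subset_boundaries rc by auto
  have eq: "(\<lambda>p. - (y p + - class_section G (class_chain G y) p) + y p) = class_section G (class_chain G y)"
    by (simp add: fun_eq_iff)
  show ?thesis using boundaries_1_add[OF boundaries_1_neg[OF d] y] eq by simp
qed

definition class_H1 :: "('a set \<Rightarrow> int) \<Rightarrow> ('a list \<Rightarrow> int) set" where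
  "class_H1 F = H1_proj (class_section G F)"

lemma class_H1_hom: "class_H1 \<in> hom ZCl (C1 Mod boundaries G (Suc 0))"
  unfolding class_H1_def using Group.hom_compose[OF class_section_hom H1_proj_hom] by (simp add: comp_def)

lemma group_hom_class_H1: "group_hom ZCl (C1 Mod boundaries G (Suc 0)) class_H1"
  by (simp add: group_hom_def group_hom_axioms_def class_H1_hom group_H1 free_ab.is_group)

lemma B_relators_subset_kernel: "B_relators \<subseteq> kernel ZCl (C1 Mod boundaries G (Suc 0)) class_H1"
proof (rule free_ab.generate_subgroup_incl[OF _ group_hom.subgroup_kernel[OF group_hom_class_H1]])
  show "B_rels G \<subseteq> kernel ZCl (C1 Mod boundaries G (Suc 0)) class_H1"
  proof
    fix r assume "r \<in> B_rels G"
    then obtain a k where r: "r = B_rel G a k" "a \<in> carrier G" by (auto simp: B_rels_def)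
    have y: "(\<lambda>p. basis k [a] p - basis 1 [a [^] k] p) \<in> boundaries G (Suc 0)"
      using null_bdry_int_pow[OF r(2)] null_bdry_subset_boundaries by blast
    have "class_section G r \<in> boundaries G (Suc 0)"
      using class_section_class_chain_boundary[OF y] class_chain_power_diff[OF r(2)] r(1) by simp
    then have "class_H1 r = \<one>\<^bsub>C1 Mod boundaries G (Suc 0)\<^esub>" unfolding class_H1_def
      using H1_proj_boundary by (simp add: FactGroup_def)
    then show "r \<in> kernel ZCl (C1 Mod boundaries G (Suc 0)) class_H1"
      using B_rel_carrier r by (simp add: kernel_def)
  qed
qed

lemma boundaries_2_subset_kernel: "boundaries G 2 \<subseteq> kernel C2 (A_grp G) (factor_chain G)"
  using factor_chain_bar_d subgroup.mem_carrier[OF subgroup_boundaries_2]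
  by (auto simp: kernel_def boundaries_2_eq)

definition H2_to_A :: "('a list \<Rightarrow> int) set \<Rightarrow> 'a word set" where
  "H2_to_A = via_rep (factor_chain G)"

definition B_to_H1 :: "('a set \<Rightarrow> int) set \<Rightarrow> ('a list \<Rightarrow> int) set" where
  "B_to_H1 = via_rep class_H1"

lemma H2_to_A_hom: "H2_to_A \<in> hom (group_homology G 2) (A_grp G)"
  unfolding H2_eq H2_to_A_def
  by (rule group_hom.via_rep_hom_subquotient[OF group_hom_factor_chain normal_boundaries_2
        boundaries_2_subset_kernel cycles_2_subset])

lemma H2_to_A_coset: "z \<in> carrier C2 \<Longrightarrow> H2_to_A (boundaries G 2 #>\<^bsub>C2\<^esub> z) = factor_chain G z"
  unfolding H2_to_A_def
  by (rule group_hom.via_rep_coset[OF group_hom_factor_chain normal_boundaries_2 boundaries_2_subset_kernel])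

lemma B_to_H1_hom: "B_to_H1 \<in> hom (B_grp G) (group_homology G (Suc 0))"
proof -
  have "ZCl\<lparr>carrier := carrier ZCl\<rparr> = ZCl" by simp
  then show ?thesis
    unfolding B_grp_eq H1_eq B_to_H1_def
    using group_hom.via_rep_hom_subquotient[OF group_hom_class_H1 normal_B_relators
        B_relators_subset_kernel order_refl] by simp
qed

lemma B_to_H1_coset: "F \<in> carrier ZCl \<Longrightarrow> B_to_H1 (B_proj F) = class_H1 F"
  unfolding B_to_H1_def
  by (rule group_hom.via_rep_coset[OF group_hom_class_H1 normal_B_relators B_relators_subset_kernel])

end

section \<open>Exactness\<close>

context pq_group
begin

lemma B_one: "\<one>\<^bsub>B_grp G\<^esub> = B_relators" by (simp add: B_grp_eq FactGroup_def)
lemma H1_one: "\<one>\<^bsub>group_homology G (Suc 0)\<^esub> = boundaries G (Suc 0)" by (simp add: H1_eq FactGroup_def)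

lemma B_carrier: "carrier (B_grp G) = B_proj ` carrier ZCl"
  by (auto simp: B_grp_eq FactGroup_def RCOSETS_def)
lemma H1_carrier: "carrier (group_homology G (Suc 0)) = H1_proj ` carrier C1"
  by (auto simp: H1_eq FactGroup_def RCOSETS_def)
lemma H2_carrier: "carrier (group_homology G 2) = (\<lambda>z. boundaries G 2 #>\<^bsub>C2\<^esub> z) ` cycles G 2"
  by (simp add: H2_eq carrier_subquotient)

lemma A_carrier_word: "u \<in> carrier (A_grp G) \<Longrightarrow> \<exists>w\<in>pq_words G. u = pq_class G w \<and> eval_word G w = \<one>"
  by (auto simp: A_carrier kernel_def GrPq_carrier pq_eps_class)

lemma kernel_word_chain:
  assumes w: "w \<in> pq_words G" and e: "eval_word G w = \<one>"
  obtains c where "c \<in> carrier C2" "bar_d G c = (\<lambda>p. letters_chain w p - basis 1 [\<one>] p)"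
    "pq_class G w = factor_chain G c" "letters_chain w \<in> boundaries G (Suc 0)"
proof -
  obtain c where c: "c \<in> carrier C2" "bar_d G c = (\<lambda>p. letters_chain w p - basis 1 [eval_word G w] p)"
    "pq_class G w = sigma G (eval_word G w) \<otimes>\<^bsub>GrPq G\<^esub> factor_chain G c"
    using word_factor_decomp[OF w] by blast
  have tk: "factor_chain G c \<in> carrier (GrPq G)" using factor_chain_kernel[OF c(1)] pq_kernel_carrier by blast
  have u: "pq_class G w = factor_chain G c" using c(3) e tk by (simp add: sigma_one)
  have d: "bar_d G c \<in> boundaries G (Suc 0)" using c(1) boundaries_1_eq by auto
  have o: "basis 1 [\<one>] \<in> boundaries G (Suc 0)" using null_bdry_one null_bdry_subset_boundaries by blast
  have "(\<lambda>p. bar_d G c p + basis 1 [\<one>] p) \<in> boundaries G (Suc 0)" by (rule boundaries_1_add[OF d o])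
  moreover have "(\<lambda>p. bar_d G c p + basis 1 [\<one>] p) = letters_chain w" using c(2) e by (simp add: fun_eq_iff)
  ultimately have "letters_chain w \<in> boundaries G (Suc 0)" by simp
  then show ?thesis using that c(1,2) e u by simp
qed

lemma A_to_B_H2_to_A:
  assumes "x \<in> carrier (group_homology G 2)"
  shows "H2_to_A x \<in> kernel (A_grp G) (B_grp G) A_to_B"
proof -
  obtain z where z: "z \<in> cycles G 2" "x = boundaries G 2 #>\<^bsub>C2\<^esub> z"
    using assms by (auto simp: H2_carrier)
  have zc: "z \<in> carrier C2" and dz: "bar_d G z = (\<lambda>_. 0)" using z by (auto simp: cycles_def chain_grp_eq)
  have "class_chain G (\<lambda>_. 0) = \<one>\<^bsub>ZCl\<^esub>" using group_hom.hom_one[OF group_hom_class_chain] by simp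
  then have "A_to_B (factor_chain G z) = B_relators"
    using A_to_B_factor_chain[OF zc] dz B_proj_relator[OF subgroup.one_closed[OF subgroup_B_relators]] by simp
  then show ?thesis
    using z H2_to_A_coset[OF zc] group_hom.hom_closed[OF group_hom_factor_chain zc]
    by (simp add: kernel_def B_one)
qed

lemma cycle_of_null_bdry:
  assumes c: "c \<in> carrier C2" and "bar_d G c \<in> null_bdry"
  obtains z where "z \<in> cycles G 2" "factor_chain G z = factor_chain G c"
proof -
  interpret T: group_hom C2 "A_grp G" "factor_chain G" by (rule group_hom_factor_chain)
  interpret D: group_hom C2 C1 "bar_d G" by (rule group_hom_bar_d_2)
  obtain q where q: "q \<in> carrier C2" "factor_chain G q = \<one>\<^bsub>A_grp G\<^esub>" "bar_d G q = bar_d G c"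
    using null_bdryE assms(2) by blast
  let ?z = "c \<otimes>\<^bsub>C2\<^esub> inv\<^bsub>C2\<^esub> q"
  have zc: "?z \<in> carrier C2" using c q(1) by (simp del: free_ab_mult free_ab_inv)
  have "bar_d G ?z = \<one>\<^bsub>C1\<^esub>"
    using c q by (simp del: free_ab_mult free_ab_inv free_ab_one)
  then have "?z \<in> cycles G 2" using zc by (simp add: cycles_def chain_grp_eq)
  moreover have "factor_chain G ?z = factor_chain G c"
    using c q by (simp del: free_ab_mult free_ab_inv)
  ultimately show ?thesis using that by blast
qed

lemma basis_one_B_relator: "basis 1 (conj_class G \<one>) \<in> B_relators"
proof -
  have "inv\<^bsub>ZCl\<^esub> B_rel G \<one> 0 \<in> B_relators"
    using subgroup.m_inv_closed[OF subgroup_B_relators B_rel_relator[of \<one> 0]] by simp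
  moreover have "inv\<^bsub>ZCl\<^esub> B_rel G \<one> 0 = basis 1 (conj_class G \<one>)"
    using B_rel_carrier[of \<one> 0] by (simp add: B_rel_def basis_def fun_eq_iff)
  ultimately show ?thesis by simp
qed

lemma kernel_A_to_B_subset:
  assumes u: "u \<in> kernel (A_grp G) (B_grp G) A_to_B"
  shows "u \<in> H2_to_A ` carrier (group_homology G 2)"
proof -
  have uc: "u \<in> carrier (A_grp G)" and Bu: "A_to_B u = B_relators" using u by (auto simp: kernel_def B_one)
  obtain w where w: "w \<in> pq_words G" "u = pq_class G w" "eval_word G w = \<one>"
    using A_carrier_word[OF uc] by blast
  obtain c where c: "c \<in> carrier C2" "bar_d G c = (\<lambda>p. letters_chain w p - basis 1 [\<one>] p)"
    "pq_class G w = factor_chain G c"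
    using kernel_word_chain[OF w(1) w(3)] by blast
  have lc: "letters_chain w \<in> carrier C1" using letters_chain_carrier[OF w(1)] .
  have "class_chain G (letters_chain w) \<in> B_relators"
    using Bu w A_to_B_class B_proj_eq_oneD[OF class_chain_letters_chain_carrier[OF w(1)]]
    by (simp add: word_B_class_def)
  moreover have "bar_d G c = letters_chain w \<otimes>\<^bsub>C1\<^esub> inv\<^bsub>C1\<^esub> basis 1 [\<one>]" using c(2) by simp
  then have "class_chain G (bar_d G c) = class_chain G (letters_chain w) \<otimes>\<^bsub>ZCl\<^esub> inv\<^bsub>ZCl\<^esub> basis 1 (conj_class G \<one>)"
    using lc group_hom.hom_mult[OF group_hom_class_chain] group_hom.hom_inv[OF group_hom_class_chain]
    by (simp del: free_ab_mult free_ab_inv add: class_chain_basis_1)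
  ultimately have "class_chain G (bar_d G c) \<in> B_relators"
    using subgroup.m_closed[OF subgroup_B_relators _ subgroup.m_inv_closed[OF subgroup_B_relators basis_one_B_relator]]
    by simp
  then have "bar_d G c \<in> null_bdry" by (rule null_bdry_of_relator[OF bar_d_2_carrier[OF c(1)]])
  then obtain z where z: "z \<in> cycles G 2" "factor_chain G z = u"
    using cycle_of_null_bdry[OF c(1)] c(3) w(2) by metis
  then have "z \<in> carrier C2" by (simp add: cycles_def chain_grp_eq)
  then show ?thesis using z H2_to_A_coset by (auto simp: H2_carrier)
qed

lemma exact_at_A: "H2_to_A ` carrier (group_homology G 2) = kernel (A_grp G) (B_grp G) A_to_B"
  using A_to_B_H2_to_A kernel_A_to_B_subset by blast

lemma exact_at_B: "A_to_B ` carrier (A_grp G) = kernel (B_grp G) (group_homology G (Suc 0)) B_to_H1"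
proof (intro Set.set_eqI iffI)
  fix S assume "S \<in> A_to_B ` carrier (A_grp G)"
  then obtain u where uc: "u \<in> carrier (A_grp G)" and S: "S = A_to_B u" by blast
  obtain w where w: "w \<in> pq_words G" "u = pq_class G w" "eval_word G w = \<one>"
    using A_carrier_word[OF uc] by blast
  have "letters_chain w \<in> boundaries G (Suc 0)" using kernel_word_chain[OF w(1) w(3)] by blast
  then have rB: "class_section G (class_chain G (letters_chain w)) \<in> boundaries G (Suc 0)"
    by (rule class_section_class_chain_boundary)
  have S2: "S = B_proj (class_chain G (letters_chain w))"
    using S w A_to_B_class by (simp add: word_B_class_def)
  have "B_to_H1 S = class_H1 (class_chain G (letters_chain w))"
    using S2 B_to_H1_coset[OF class_chain_letters_chain_carrier[OF w(1)]] by simp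
  also have "\<dots> = boundaries G (Suc 0)" unfolding class_H1_def using H1_proj_boundary[OF rB] .
  finally have "B_to_H1 S = \<one>\<^bsub>group_homology G (Suc 0)\<^esub>" by (simp add: H1_one)
  moreover have "S \<in> carrier (B_grp G)" using S uc hom_in_carrier[OF A_to_B_hom] by blast
  ultimately show "S \<in> kernel (B_grp G) (group_homology G (Suc 0)) B_to_H1" by (simp add: kernel_def)
next
  fix S assume "S \<in> kernel (B_grp G) (group_homology G (Suc 0)) B_to_H1"
  then have Sc: "S \<in> carrier (B_grp G)" and fS: "B_to_H1 S = boundaries G (Suc 0)"
    by (auto simp: kernel_def H1_one)
  obtain F where F: "F \<in> carrier ZCl" "S = B_proj F" using Sc by (auto simp: B_carrier)
  have rc: "class_section G F \<in> carrier C1" using group_hom.hom_closed[OF group_hom_class_section F(1)] .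
  have "H1_proj (class_section G F) = boundaries G (Suc 0)"
    using fS F B_to_H1_coset[OF F(1)] by (simp add: class_H1_def)
  then have "class_section G F \<in> boundaries G (Suc 0)" by (rule H1_proj_eq_oneD[OF rc])
  then obtain b where b: "b \<in> carrier C2" "class_section G F = bar_d G b" by (auto simp: boundaries_1_eq)
  have uc: "factor_chain G b \<in> carrier (A_grp G)" using group_hom.hom_closed[OF group_hom_factor_chain b(1)] .
  have "A_to_B (factor_chain G b) = B_proj (class_chain G (bar_d G b))" by (rule A_to_B_factor_chain[OF b(1)])
  also have "\<dots> = S" using b(2) class_chain_class_section[OF F(1)] F(2) by simp
  finally show "S \<in> A_to_B ` carrier (A_grp G)" using uc by (metis image_eqI)
qed

lemma B_to_H1_surj: "B_to_H1 ` carrier (B_grp G) = carrier (group_homology G (Suc 0))"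
proof (intro Set.set_eqI iffI)
  fix Y assume "Y \<in> B_to_H1 ` carrier (B_grp G)"
  then show "Y \<in> carrier (group_homology G (Suc 0))" using hom_in_carrier[OF B_to_H1_hom] by auto
next
  fix Y assume "Y \<in> carrier (group_homology G (Suc 0))"
  then obtain x where x: "x \<in> carrier C1" "Y = H1_proj x" by (auto simp: H1_carrier)
  have clc: "class_chain G x \<in> carrier ZCl" using group_hom.hom_closed[OF group_hom_class_chain x(1)] .
  have rc: "class_section G (class_chain G x) \<in> carrier C1"
    using group_hom.hom_closed[OF group_hom_class_section clc] .
  have "x \<otimes>\<^bsub>C1\<^esub> inv\<^bsub>C1\<^esub> class_section G (class_chain G x) \<in> boundaries G (Suc 0)"
    using null_bdry_section_diff[OF x(1)] null_bdry_subset_boundaries by blast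
  then have "x \<in> boundaries G (Suc 0) #>\<^bsub>C1\<^esub> class_section G (class_chain G x)"
    by (rule subgroup.rcos_module_rev[OF subgroup_boundaries_1 free_ab.is_group rc x(1)])
  then have "H1_proj (class_section G (class_chain G x)) = H1_proj x"
    by (rule free_ab.repr_independence[OF _ rc subgroup_boundaries_1])
  then have "B_to_H1 (B_proj (class_chain G x)) = Y"
    using B_to_H1_coset[OF clc] x(2) by (simp add: class_H1_def)
  moreover have "B_proj (class_chain G x) \<in> carrier (B_grp G)" using clc by (simp add: B_carrier)
  ultimately show "Y \<in> B_to_H1 ` carrier (B_grp G)" by (metis image_eqI)
qed

end

theorem mainTheorem10:
  fixes G :: "('a, 'b) monoid_scheme"
  assumes "group G"
  shows "\<exists>f1 f2 f3.
     f1 \<in> hom (group_homology G 2) (A_grp G) \<and>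
     f2 \<in> hom (A_grp G) (B_grp G) \<and>
     f3 \<in> hom (B_grp G) (group_homology G 1) \<and>
     f1 ` carrier (group_homology G 2) = kernel (A_grp G) (B_grp G) f2 \<and>
     f2 ` carrier (A_grp G) = kernel (B_grp G) (group_homology G 1) f3 \<and>
     f3 ` carrier (B_grp G) = carrier (group_homology G 1)"
proof -
  interpret pq_group G using assms by (simp add: pq_group_def)
  show ?thesis
    using H2_to_A_hom A_to_B_hom B_to_H1_hom exact_at_A exact_at_B B_to_H1_surj
    unfolding One_nat_def by blast
qed

end
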